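(* Let $(\mathcal C,\Delta,\delta)$ be a coalgebra and let $L$ be a sesquilinear form on $\mathcal C$. Then the following are equivalent: (i) $L$ is conditionally positive and hermitian; (ii) $\exp_\star(tL)$ is positive for all $t\in\mathbb R_+$.
   Context: A coalgebra $(\mathcal C,\Delta,\delta)$ is a complex vector space with linear $\Delta:\mathcal C\to\mathcal C\otimes\mathcal C$ and linear $\delta:\mathcal C\to\mathbb C$ satisfying coassociativity $(\Delta\otimes\mathrm{id})\Delta=(\mathrm{id}\otimes\Delta)\Delta$ and the counit property $(\delta\otimes\mathrm{id})\Delta=\mathrm{id}=(\mathrm{id}\otimes\delta)\Delta$. Write $\Delta c=\sum c_{(1)}\otimes c_{(2)}$. Sesquilinear forms $K$ on $\mathcal C$ are antilinear in the first and linear in the second variable; they are identified with linear functionals on the coalgebra $\overline{\mathcal C}\otimes\mathcal C$ (where $\overline{\mathcal C}$ is the complex conjugate coalgebra and the tensor product of coalgebras carries the comultiplication $(\mathrm{id}\otimes\tau\otimes\mathrm{id})(\overline\Delta\otimes\Delta)$, $\tau$ the flip, and counit $\overline\delta\otimes\delta$). The convolution of sesquilinear forms is $(K\star L)(c,d)=\sum K(c_{(1)},d_{(1)})\,L(c_{(2)},d_{(2)})$, with unit $(c,d)\mapsto\overline{\delta(c)}\delta(d)$, and $\exp_\star L=\sum_{k\ge0}L^{\star k}/k!$, the series converging pointwise. $K$ is positive if $K(c,c)\ge0$ for all $c\in\mathcal C$, hermitian if $K(c,d)=\overline{K(d,c)}$ for all $c,d$, and conditionally positive if $K(c,c)\ge0$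 for all $c\in\mathcal C$ with $\delta(c)=0$. *)

theory Defs
  imports "HOL-Analysis.Analysis" "HOL-Library.Complex_Order"
begin

text \<open>An element of C (x) C is represented by a finite list of pairs (x,y),
  standing for the sum of the x (x) y.  Since scalar multilinear forms
  separate points of algebraic tensor products, linearity and coassociativity
  of the comultiplication are expressed by evaluation against all scalar
  bilinear resp. trilinear forms.\<close>

definition lin_form :: "(complex \<Rightarrow> 'c::ab_group_add \<Rightarrow> 'c) \<Rightarrow> ('c \<Rightarrow> complex) \<Rightarrow> bool" where
  "lin_form smult_c f \<longleftrightarrow> Vector_Spaces.linear smult_c (*) f"

definition bilin_form :: "(complex \<Rightarrow> 'c::ab_group_add \<Rightarrow> 'c) \<Rightarrow> ('c \<Rightarrow> 'c \<Rightarrow> complex) \<Rightarrow> bool" where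
  "bilin_form smult_c B \<longleftrightarrow> (\<forall>x. lin_form smult_c (B x)) \<and> (\<forall>y. lin_form smult_c (\<lambda>x. B x y))"

definition trilin_form :: "(complex \<Rightarrow> 'c::ab_group_add \<Rightarrow> 'c) \<Rightarrow> ('c \<Rightarrow> 'c \<Rightarrow> 'c \<Rightarrow> complex) \<Rightarrow> bool" where
  "trilin_form smult_c T \<longleftrightarrow> (\<forall>x y. lin_form smult_c (T x y)) \<and> (\<forall>x z. lin_form smult_c (\<lambda>y. T x y z))
      \<and> (\<forall>y z. lin_form smult_c (\<lambda>x. T x y z))"

definition tsum :: "('c \<times> 'c) list \<Rightarrow> ('c \<Rightarrow> 'c \<Rightarrow> 'v::comm_monoid_add) \<Rightarrow> 'v" where
  "tsum xs f = sum_list (map (\<lambda>(x, y). f x y) xs)"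

definition coalgebra ::
  "(complex \<Rightarrow> 'c::ab_group_add \<Rightarrow> 'c) \<Rightarrow> ('c \<Rightarrow> ('c \<times> 'c) list) \<Rightarrow> ('c \<Rightarrow> complex) \<Rightarrow> bool" where
  "coalgebra smult_c \<Delta> \<delta> \<longleftrightarrow>
     vector_space smult_c
   \<and> (\<forall>B. bilin_form smult_c B \<longrightarrow> lin_form smult_c (\<lambda>c. tsum (\<Delta> c) B))
   \<and> lin_form smult_c \<delta>
   \<and> (\<forall>T. trilin_form smult_c T \<longrightarrow>
        (\<forall>c. tsum (\<Delta> c) (\<lambda>x y. tsum (\<Delta> x) (\<lambda>u v. T u v y))
           = tsum (\<Delta> c) (\<lambda>x y. tsum (\<Delta> y) (\<lambda>u v. T x u v))))
   \<and> (\<forall>c. tsum (\<Delta> c) (\<lambda>x y. smult_c (\<delta> x) y) = c)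
   \<and> (\<forall>c. tsum (\<Delta> c) (\<lambda>x y. smult_c (\<delta> y) x) = c)"

definition sesquilinear :: "(complex \<Rightarrow> 'c::ab_group_add \<Rightarrow> 'c) \<Rightarrow> ('c \<Rightarrow> 'c \<Rightarrow> complex) \<Rightarrow> bool" where
  "sesquilinear smult_c K \<longleftrightarrow> (\<forall>c. lin_form smult_c (K c)) \<and> (\<forall>d. lin_form smult_c (\<lambda>c. cnj (K c d)))"

definition conv :: "('c \<Rightarrow> ('c \<times> 'c) list) \<Rightarrow> ('c \<Rightarrow> 'c \<Rightarrow> complex) \<Rightarrow> ('c \<Rightarrow> 'c \<Rightarrow> complex) \<Rightarrow> ('c \<Rightarrow> 'c \<Rightarrow> complex)" where
  "conv \<Delta> K L c d = tsum (\<Delta> c) (\<lambda>c1 c2. tsum (\<Delta> d) (\<lambda>d1 d2. K c1 d1 * L c2 d2))"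

definition conv_unit :: "('c \<Rightarrow> complex) \<Rightarrow> ('c \<Rightarrow> 'c \<Rightarrow> complex)" where
  "conv_unit \<delta> c d = cnj (\<delta> c) * \<delta> d"

primrec conv_pow :: "('c \<Rightarrow> ('c \<times> 'c) list) \<Rightarrow> ('c \<Rightarrow> complex) \<Rightarrow> ('c \<Rightarrow> 'c \<Rightarrow> complex) \<Rightarrow> nat \<Rightarrow> ('c \<Rightarrow> 'c \<Rightarrow> complex)" where
  "conv_pow \<Delta> \<delta> L 0 = conv_unit \<delta>"
| "conv_pow \<Delta> \<delta> L (Suc k) = conv \<Delta> L (conv_pow \<Delta> \<delta> L k)"

definition exp_star :: "('c \<Rightarrow> ('c \<times> 'c) list) \<Rightarrow> ('c \<Rightarrow> complex) \<Rightarrow> ('c \<Rightarrow> 'c \<Rightarrow> complex) \<Rightarrow> ('c \<Rightarrow> 'c \<Rightarrow> complex)" where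
  "exp_star \<Delta> \<delta> L c d = (\<Sum>k. conv_pow \<Delta> \<delta> L k c d / of_nat (fact k))"

definition positive_form :: "('c \<Rightarrow> 'c \<Rightarrow> complex) \<Rightarrow> bool" where
  "positive_form K \<longleftrightarrow> (\<forall>c. 0 \<le> K c c)"

definition hermitian_form :: "('c \<Rightarrow> 'c \<Rightarrow> complex) \<Rightarrow> bool" where
  "hermitian_form K \<longleftrightarrow> (\<forall>c d. K c d = cnj (K d c))"

definition cond_positive :: "('c \<Rightarrow> complex) \<Rightarrow> ('c \<Rightarrow> 'c \<Rightarrow> complex) \<Rightarrow> bool" where
  "cond_positive \<delta> K \<longleftrightarrow> (\<forall>c. \<delta> c = 0 \<longrightarrow> 0 \<le> K c c)"

end

(*
  If L is hermitian and conditionally positive, fix c0 with delta c0 = 1 and put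
  psi = L c0 - (Re (L c0 c0) / 2) delta. Completing the square shows that
  Z s = eps + s L + s^2 conj(psi) psi is a positive form for s >= 0 (eps the convolution unit).
  By the Schur product theorem convolution preserves positivity, so the r-th convolution power
  of Z (t / r) is positive. These powers converge pointwise to exp_star (t L) by Euler's product
  formula; this limit is taken in finite dimensions, since every c lies in a finite-dimensional
  comodule, on which convolution with a form acts as a linear map on Gram matrices.
  Conversely, exp_star (t L) (c, c) = |delta c|^2 + t L (c, c) + O(t^2) is real and nonnegative
  for t >= 0, hence L (c, c) is real, and nonnegative when delta c = 0. Polarization turns the
  first property into hermiticity.
*)
theory Submission
  imports Defs
begin

section \<open>Linear forms\<close>

lemma vector_space_complex: "vector_space ((*) :: complex \<Rightarrow> complex \<Rightarrow> complex)"
  by (simp add: vector_space_def algebra_simps)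

lemma lin_formI:
  assumes "vector_space sm" "\<And>x y. f (x + y) = f x + f y" "\<And>a x. f (sm a x) = a * f x"
  shows "lin_form sm f"
  using assms vector_space_complex unfolding lin_form_def Vector_Spaces.linear_iff by auto

lemma lin_form_add: "lin_form sm f \<Longrightarrow> f (x + y) = f x + f y"
  and lin_form_scale: "lin_form sm f \<Longrightarrow> f (sm a x) = a * f x"
  and lin_form_vector_space: "lin_form sm f \<Longrightarrow> vector_space sm"
  unfolding lin_form_def Vector_Spaces.linear_iff by auto

lemma lin_form_zero: "lin_form sm f \<Longrightarrow> f 0 = 0"
  using lin_form_add[of sm f 0 0] by simp

lemma lin_form_diff: "lin_form sm f \<Longrightarrow> f (x - y) = f x - f y"
  by (metis add_diff_cancel lin_form_add diff_add_cancel)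

lemma lin_form_sum: "lin_form sm f \<Longrightarrow> f (\<Sum>i\<in>S. g i) = (\<Sum>i\<in>S. f (g i))"
  by (induction S rule: infinite_finite_induct) (auto simp: lin_form_zero lin_form_add)

lemma lin_form_sum_scale:
  "lin_form sm f \<Longrightarrow> f (\<Sum>i\<in>S. sm (a i) (g i)) = (\<Sum>i\<in>S. a i * f (g i))"
  by (simp add: lin_form_sum lin_form_scale)

lemma lin_form_cmult: "lin_form sm f \<Longrightarrow> lin_form sm (\<lambda>x. a * f x)"
  and lin_form_multc: "lin_form sm f \<Longrightarrow> lin_form sm (\<lambda>x. f x * a)"
  using lin_form_vector_space[of sm f]
  by (auto intro!: lin_formI simp: lin_form_add lin_form_scale algebra_simps)

lemma lin_form_plus: "lin_form sm f \<Longrightarrow> lin_form sm g \<Longrightarrow> lin_form sm (\<lambda>x. f x + g x)"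
  using lin_form_vector_space[of sm f]
  by (intro lin_formI) (auto simp: lin_form_add lin_form_scale algebra_simps)

lemma lin_form_minus: "lin_form sm f \<Longrightarrow> lin_form sm g \<Longrightarrow> lin_form sm (\<lambda>x. f x - g x)"
  using lin_form_vector_space[of sm f]
  by (intro lin_formI) (auto simp: lin_form_add lin_form_scale algebra_simps)

lemma lin_form_zero_fun: "vector_space sm \<Longrightarrow> lin_form sm (\<lambda>x. 0)"
  by (rule lin_formI) auto

lemma lin_form_sum_fun:
  "vector_space sm \<Longrightarrow> (\<And>i. i \<in> S \<Longrightarrow> lin_form sm (f i)) \<Longrightarrow> lin_form sm (\<lambda>x. \<Sum>i\<in>S. f i x)"
  by (induction S rule: infinite_finite_induct) (auto intro: lin_form_zero_fun lin_form_plus)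

lemma tsum_Nil [simp]: "tsum [] f = 0"
  and tsum_Cons [simp]: "tsum ((x, y) # xs) f = f x y + tsum xs f"
  by (simp_all add: tsum_def)

lemma tsum_conv_sum_nth: "tsum xs f = (\<Sum>i<length xs. f (fst (xs ! i)) (snd (xs ! i)))"
  unfolding tsum_def by (simp add: sum_list_sum_nth atLeast0LessThan case_prod_beta)

lemma tsum_hom:
  assumes "\<And>a b. h (a + b) = h a + h b" and "h 0 = 0"
  shows "h (tsum xs f) = tsum xs (\<lambda>x y. h (f x y))"
  using assms by (induction xs) auto

lemma tsum_cong: "(\<And>x y. (x, y) \<in> set xs \<Longrightarrow> f x y = g x y) \<Longrightarrow> tsum xs f = tsum xs g"
  by (induction xs) auto

lemma tsum_zero: "tsum xs (\<lambda>x y. 0) = 0"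
  by (induction xs) auto

lemma tsum_sum: "tsum xs (\<lambda>x y. \<Sum>k\<in>K. f k x y) = (\<Sum>k\<in>K. tsum xs (f k))"
  by (induction xs) (auto simp: sum.distrib)

lemma tsum_cmult: "(a::complex) * tsum xs f = tsum xs (\<lambda>x y. a * f x y)"
  by (rule tsum_hom) (simp_all add: distrib_left)

lemma tsum_cnj: "cnj (tsum xs f) = tsum xs (\<lambda>x y. cnj (f x y))"
  by (rule tsum_hom) simp_all

lemma lin_form_tsum: "lin_form sm f \<Longrightarrow> f (tsum xs g) = tsum xs (\<lambda>x y. f (g x y))"
  by (rule tsum_hom) (simp_all add: lin_form_add lin_form_zero)

lemma lin_form_tsum_fun:
  assumes "vector_space sm" "\<And>x y. lin_form sm (\<lambda>u. F u x y)"
  shows "lin_form sm (\<lambda>u. tsum xs (F u))"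
  using assms by (induction xs) (auto intro!: lin_form_zero_fun lin_form_plus)

section \<open>Sesquilinear forms and convolution\<close>

lemma sesquilinearI:
  "(\<And>c. lin_form sm (K c)) \<Longrightarrow> (\<And>d. lin_form sm (\<lambda>c. cnj (K c d))) \<Longrightarrow> sesquilinear sm K"
  unfolding sesquilinear_def by auto

lemma sesquilinear_lin_right: "sesquilinear sm K \<Longrightarrow> lin_form sm (K c)"
  and sesquilinear_lin_left: "sesquilinear sm K \<Longrightarrow> lin_form sm (\<lambda>c. cnj (K c d))"
  unfolding sesquilinear_def by auto

lemma sesquilinear_add_right: "sesquilinear sm K \<Longrightarrow> K c (x + y) = K c x + K c y"
  and sesquilinear_scale_right: "sesquilinear sm K \<Longrightarrow> K c (sm a x) = a * K c x"
  and sesquilinear_tsum_right: "sesquilinear sm K \<Longrightarrow> K c (tsum xs g) = tsum xs (\<lambda>x y. K c (g x y))"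
  and sesquilinear_sum_right: "sesquilinear sm K \<Longrightarrow> K c (\<Sum>i\<in>S. f i) = (\<Sum>i\<in>S. K c (f i))"
  using sesquilinear_lin_right[of sm K c]
  by (simp_all add: lin_form_add lin_form_scale lin_form_tsum lin_form_sum)

lemma sesquilinear_add_left: "sesquilinear sm K \<Longrightarrow> K (x + y) d = K x d + K y d"
  using lin_form_add[OF sesquilinear_lin_left[of sm K d], of x y] by (metis complex_cnj_add complex_cnj_cnj)

lemma sesquilinear_scale_left: "sesquilinear sm K \<Longrightarrow> K (sm a x) d = cnj a * K x d"
  using lin_form_scale[OF sesquilinear_lin_left[of sm K d], of a x] by (metis complex_cnj_cnj complex_cnj_mult)

lemma sesquilinear_zero_left: "sesquilinear sm K \<Longrightarrow> K 0 d = 0"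
  using sesquilinear_add_left[of sm K 0 0 d] by simp

lemma sesquilinear_tsum_left: "sesquilinear sm K \<Longrightarrow> K (tsum xs g) d = tsum xs (\<lambda>x y. K (g x y) d)"
  by (rule tsum_hom) (simp_all add: sesquilinear_add_left sesquilinear_zero_left)

lemma sesquilinear_sum_left: "sesquilinear sm K \<Longrightarrow> K (\<Sum>i\<in>S. f i) d = (\<Sum>i\<in>S. K (f i) d)"
  by (induction S rule: infinite_finite_induct)
    (simp_all add: sesquilinear_add_left sesquilinear_zero_left)

lemma sesquilinear_rank_one:
  "lin_form sm \<phi> \<Longrightarrow> lin_form sm \<psi> \<Longrightarrow> sesquilinear sm (\<lambda>c d. cnj (\<phi> c) * \<psi> d)"
  by (rule sesquilinearI) (simp_all add: lin_form_cmult lin_form_multc)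

lemma sesquilinear_plus:
  "sesquilinear sm K \<Longrightarrow> sesquilinear sm G \<Longrightarrow> sesquilinear sm (\<lambda>c d. K c d + G c d)"
  by (rule sesquilinearI) (simp_all add: lin_form_plus sesquilinear_lin_left sesquilinear_lin_right)

lemma sesquilinear_cmult: "sesquilinear sm K \<Longrightarrow> sesquilinear sm (\<lambda>c d. s * K c d)"
  by (rule sesquilinearI) (simp_all add: lin_form_cmult sesquilinear_lin_left sesquilinear_lin_right)

lemma sesquilinear_divide: "sesquilinear sm K \<Longrightarrow> sesquilinear sm (\<lambda>c d. K c d / a)"
  using sesquilinear_cmult[of sm K "inverse a"] by (simp add: divide_inverse_commute)

lemma sesquilinear_quadratic_sum:
  assumes "sesquilinear sm K"
  shows "K (\<Sum>i\<in>S. sm (v i) (x i)) (\<Sum>i\<in>S. sm (v i) (x i))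
    = (\<Sum>i\<in>S. \<Sum>i'\<in>S. cnj (v i) * K (x i) (x i') * v i')"
  using assms by (simp add: sesquilinear_sum_left sesquilinear_sum_right sesquilinear_scale_left
      sesquilinear_scale_right sum_distrib_left mult_ac)

lemma hermitian_formI_real_diagonal:
  assumes K: "sesquilinear sm K" and real: "\<And>c. Im (K c c) = 0"
  shows "hermitian_form K"
  unfolding hermitian_form_def
proof (intro allI)
  fix c d
  have "K (c + d) (c + d) = K c c + K c d + K d c + K d d"
    using K by (simp add: sesquilinear_add_left sesquilinear_add_right)
  then have "Im (K c d + K d c) = 0"
    using real[of "c + d"] real[of c] real[of d] by simp
  moreover have "K (c + sm \<i> d) (c + sm \<i> d) = K c c + \<i> * K c d - \<i> * K d c + K d d"
    using K by (simp add: sesquilinear_add_left sesquilinear_add_right sesquilinear_scale_left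
        sesquilinear_scale_right algebra_simps)
  then have "Re (K c d - K d c) = 0"
    using real[of "c + sm \<i> d"] real[of c] real[of d] by simp
  ultimately show "K c d = cnj (K d c)"
    by (simp add: complex_eq_iff)
qed

lemma positive_form_imp_hermitian: "sesquilinear sm K \<Longrightarrow> positive_form K \<Longrightarrow> hermitian_form K"
  by (rule hermitian_formI_real_diagonal) (auto simp: positive_form_def less_eq_complex_def)

lemma hermitian_form_cmult_real:
  assumes "hermitian_form K"
  shows "hermitian_form (\<lambda>c d. of_real t * K c d)"
  unfolding hermitian_form_def
proof (intro allI)
  fix c d
  have "K c d = cnj (K d c)"
    using assms unfolding hermitian_form_def by blast
  then show "of_real t * K c d = cnj (of_real t * K d c)"
    by simp
qed

lemma cond_positive_cmult_nonneg:
  "0 \<le> t \<Longrightarrow> cond_positive \<delta> K \<Longrightarrow> cond_positive \<delta> (\<lambda>c d. of_real t * K c d)"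
  by (simp add: cond_positive_def less_eq_complex_def)

lemma conv_cmult_left: "conv \<Delta> (\<lambda>c d. s * K c d) G = (\<lambda>c d. s * conv \<Delta> K G c d)"
  and conv_cmult_right: "conv \<Delta> K (\<lambda>c d. s * G c d) = (\<lambda>c d. s * conv \<Delta> K G c d)"
  by (simp_all add: fun_eq_iff conv_def tsum_cmult mult_ac)

lemma conv_pow_cmult: "conv_pow \<Delta> \<delta> (\<lambda>c d. s * K c d) k = (\<lambda>c d. s ^ k * conv_pow \<Delta> \<delta> K k c d)"
  by (induction k) (simp_all add: conv_cmult_left conv_cmult_right mult.assoc)

locale coalg =
  fixes sm :: "complex \<Rightarrow> 'c::ab_group_add \<Rightarrow> 'c"
    and \<Delta> :: "'c \<Rightarrow> ('c \<times> 'c) list"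
    and \<delta> :: "'c \<Rightarrow> complex"
  assumes coalgebra: "coalgebra sm \<Delta> \<delta>"
begin

sublocale vector_space sm
  using coalgebra unfolding coalgebra_def by auto

lemma lin_form_counit: "lin_form sm \<delta>"
  and lin_form_comul: "bilin_form sm B \<Longrightarrow> lin_form sm (\<lambda>c. tsum (\<Delta> c) B)"
  and coassoc: "trilin_form sm T \<Longrightarrow>
     tsum (\<Delta> c) (\<lambda>x y. tsum (\<Delta> x) (\<lambda>u v. T u v y)) = tsum (\<Delta> c) (\<lambda>x y. tsum (\<Delta> y) (\<lambda>u v. T x u v))"
  and counit_left: "tsum (\<Delta> c) (\<lambda>x y. sm (\<delta> x) y) = c"
  and counit_right: "tsum (\<Delta> c) (\<lambda>x y. sm (\<delta> y) x) = c"
  using coalgebra unfolding coalgebra_def by auto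

lemma scale_tsum: "sm a (tsum xs g) = tsum xs (\<lambda>x y. sm a (g x y))"
  by (rule tsum_hom) (simp_all add: scale_right_distrib)

lemma sesquilinear_conv:
  assumes K: "sesquilinear sm K" and G: "sesquilinear sm G"
  shows "sesquilinear sm (conv \<Delta> K G)"
proof (rule sesquilinearI)
  fix c
  have "lin_form sm (\<lambda>d. tsum (\<Delta> d) (\<lambda>d1 d2. K c1 d1 * G c2 d2))" for c1 c2
    using K G by (intro lin_form_comul) (simp add: bilin_form_def lin_form_cmult lin_form_multc
        sesquilinear_lin_right)
  then show "lin_form sm (conv \<Delta> K G c)"
    unfolding conv_def[abs_def] by (intro lin_form_tsum_fun vector_space_axioms)
next
  fix d
  have "bilin_form sm (\<lambda>c1 c2. tsum (\<Delta> d) (\<lambda>d1 d2. cnj (K c1 d1) * cnj (G c2 d2)))"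
    using K G unfolding bilin_form_def
    by (auto intro!: lin_form_tsum_fun vector_space_axioms lin_form_cmult lin_form_multc
        sesquilinear_lin_left)
  then show "lin_form sm (\<lambda>c. cnj (conv \<Delta> K G c d))"
    unfolding conv_def tsum_cnj complex_cnj_mult by (rule lin_form_comul)
qed

lemma sesquilinear_conv_unit: "sesquilinear sm (conv_unit \<delta>)"
  unfolding conv_unit_def[abs_def] by (intro sesquilinear_rank_one lin_form_counit)

lemma sesquilinear_conv_pow: "sesquilinear sm K \<Longrightarrow> sesquilinear sm (conv_pow \<Delta> \<delta> K k)"
  by (induction k) (simp_all add: sesquilinear_conv_unit sesquilinear_conv)

lemma conv_conv_unit_right:
  assumes K: "sesquilinear sm K"
  shows "conv \<Delta> K (conv_unit \<delta>) = K"
proof (intro ext)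
  fix c d
  have "K c d = K (tsum (\<Delta> c) (\<lambda>x y. sm (\<delta> y) x)) (tsum (\<Delta> d) (\<lambda>u v. sm (\<delta> v) u))"
    by (simp add: counit_right)
  also have "\<dots> = conv \<Delta> K (conv_unit \<delta>) c d"
    using K by (simp add: conv_def conv_unit_def sesquilinear_tsum_left sesquilinear_tsum_right
        sesquilinear_scale_left sesquilinear_scale_right tsum_cmult algebra_simps)
  finally show "conv \<Delta> K (conv_unit \<delta>) c d = K c d" ..
qed

end

section \<open>Positive semidefinite matrices and the Schur product theorem\<close>

definition psd_on :: "'i set \<Rightarrow> ('i \<Rightarrow> 'i \<Rightarrow> complex) \<Rightarrow> bool" where
  "psd_on S A \<longleftrightarrow> (\<forall>i\<in>S. \<forall>i'\<in>S. A i i' = cnj (A i' i))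
     \<and> (\<forall>v. 0 \<le> (\<Sum>i\<in>S. \<Sum>i'\<in>S. cnj (v i) * A i i' * v i'))"

lemma psd_on_hermitian: "psd_on S A \<Longrightarrow> i \<in> S \<Longrightarrow> i' \<in> S \<Longrightarrow> A i i' = cnj (A i' i)"
  and psd_on_quadratic: "psd_on S A \<Longrightarrow> 0 \<le> (\<Sum>i\<in>S. \<Sum>i'\<in>S. cnj (v i) * A i i' * v i')"
  unfolding psd_on_def by blast+

lemma psd_on_subset:
  assumes A: "psd_on T A" and "S \<subseteq> T" "finite T"
  shows "psd_on S A"
  unfolding psd_on_def
proof (intro conjI ballI allI)
  fix v :: "_ \<Rightarrow> complex"
  define u where "u i = (if i \<in> S then v i else 0)" for i
  have "(\<Sum>i\<in>T. \<Sum>i'\<in>T. cnj (u i) * A i i' * u i') = (\<Sum>i\<in>S. \<Sum>i'\<in>T. cnj (u i) * A i i' * u i')"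
    using assms(2,3) by (intro sum.mono_neutral_right) (auto simp: u_def)
  also have "\<dots> = (\<Sum>i\<in>S. \<Sum>i'\<in>S. cnj (u i) * A i i' * u i')"
    using assms(2,3) by (intro sum.cong refl sum.mono_neutral_right) (auto simp: u_def)
  also have "\<dots> = (\<Sum>i\<in>S. \<Sum>i'\<in>S. cnj (v i) * A i i' * v i')"
    by (intro sum.cong) (auto simp: u_def)
  finally show "0 \<le> (\<Sum>i\<in>S. \<Sum>i'\<in>S. cnj (v i) * A i i' * v i')"
    using psd_on_quadratic[OF A, of u] by simp
qed (use A \<open>S \<subseteq> T\<close> in \<open>auto simp: psd_on_def\<close>)

lemma psd_on_diagonal_nonneg: "psd_on S A \<Longrightarrow> finite S \<Longrightarrow> i \<in> S \<Longrightarrow> 0 \<le> A i i"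
  using psd_on_quadratic[OF psd_on_subset[of S A "{i}"], of "\<lambda>_. 1"] by simp

lemma complex_affine_nonneg_imp_zero:
  fixes q r :: complex
  assumes nonneg: "\<And>\<mu>. 0 \<le> q + cnj \<mu> * r + \<mu> * cnj r"
  shows "r = 0"
proof (rule ccontr)
  assume "r \<noteq> 0"
  define t where "t = (Re q + 1) / (2 * cmod r ^ 2)"
  have "q + cnj (- of_real t * r) * r + (- of_real t * r) * cnj r = q - of_real (2 * t * cmod r ^ 2)"
    by (simp add: cmod_power2 complex_eq_iff algebra_simps) (simp add: power2_eq_square)
  also have "2 * t * cmod r ^ 2 = Re q + 1"
    using \<open>r \<noteq> 0\<close> by (simp add: t_def)
  finally have "0 \<le> q - of_real (Re q + 1)"
    by (metis nonneg)
  then show False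
    by (simp add: less_eq_complex_def)
qed

lemma psd_on_insert_quadratic:
  assumes A: "psd_on (insert s S) A" and "finite S" "s \<notin> S"
  shows "0 \<le> (\<Sum>i\<in>S. \<Sum>i'\<in>S. cnj (v i) * A i i' * v i')
      + cnj \<mu> * (\<Sum>i\<in>S. A s i * v i) + \<mu> * cnj (\<Sum>i\<in>S. A s i * v i) + cnj \<mu> * A s s * \<mu>"
proof -
  define u where "u i = (if i = s then \<mu> else v i)" for i
  have u: "u i = v i" if "i \<in> S" for i
    using that \<open>s \<notin> S\<close> by (auto simp: u_def)
  have "A i s = cnj (A s i)" if "i \<in> S" for i
    using psd_on_hermitian[OF A] that by blast
  then have "(\<Sum>i\<in>insert s S. \<Sum>i'\<in>insert s S. cnj (u i) * A i i' * u i')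
    = (\<Sum>i\<in>S. \<Sum>i'\<in>S. cnj (v i) * A i i' * v i')
      + cnj \<mu> * (\<Sum>i\<in>S. A s i * v i) + \<mu> * cnj (\<Sum>i\<in>S. A s i * v i) + cnj \<mu> * A s s * \<mu>"
    using assms(2,3) by (simp add: u sum.distrib sum_distrib_left sum_distrib_right mult_ac
        cong: sum.cong) (simp add: u_def mult_ac)
  with psd_on_quadratic[OF A, of u] show ?thesis
    by simp
qed

lemma psd_on_zero_diagonal_row:
  assumes A: "psd_on (insert s S) A" and "finite S" "s \<notin> S" "A s s = 0" "i \<in> S"
  shows "A s i = 0"
proof -
  define v :: "_ \<Rightarrow> complex" where "v j = (if j = i then 1 else 0)" for j
  have "(\<Sum>j\<in>S. A s j * v j) = A s i" "(\<Sum>j\<in>S. \<Sum>j'\<in>S. cnj (v j) * A j j' * v j') = A i i"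
    using assms(2,5) by (simp_all add: v_def if_distrib[of cnj] if_distrib[of "(*) _"]
        if_distrib[of "\<lambda>x. x * _"] sum.delta cong: if_cong)
  then show ?thesis
    using psd_on_insert_quadratic[OF assms(1-3), of v] \<open>A s s = 0\<close>
    by (intro complex_affine_nonneg_imp_zero) auto
qed

lemma psd_on_schur_complement:
  assumes A: "psd_on (insert s S) A" and "finite S" "s \<notin> S" "A s s \<noteq> 0"
  shows "psd_on S (\<lambda>i i'. A i i' - cnj (A s i) * A s i' / A s s)"
  unfolding psd_on_def
proof (intro conjI ballI allI)
  have "cnj (A s s) = A s s"
    using psd_on_hermitian[OF A, of s s] by simp
  then show "A i i' - cnj (A s i) * A s i' / A s s = cnj (A i' i - cnj (A s i') * A s i / A s s)"
    if "i \<in> S" "i' \<in> S" for i i'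
    using psd_on_hermitian[OF A, of i i'] that by (simp add: mult.commute)
  fix v
  let ?r = "\<Sum>i\<in>S. A s i * v i"
  let ?Q = "\<lambda>A. \<Sum>i\<in>S. \<Sum>i'\<in>S. cnj (v i) * A i i' * v i'"
  have "?Q (\<lambda>i i'. A i i' - cnj (A s i) * A s i' / A s s) = ?Q A - cnj ?r * ?r / A s s"
    by (simp add: algebra_simps sum_subtractf sum_distrib_left sum_divide_distrib cnj_sum mult_ac)
  also have "\<dots> = ?Q A + cnj (- ?r / A s s) * ?r + (- ?r / A s s) * cnj ?r
      + cnj (- ?r / A s s) * A s s * (- ?r / A s s)"
    using \<open>cnj (A s s) = A s s\<close> \<open>A s s \<noteq> 0\<close> by (simp add: field_simps power2_eq_square)
  finally show "0 \<le> ?Q (\<lambda>i i'. A i i' - cnj (A s i) * A s i' / A s s)"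
    using psd_on_insert_quadratic[OF assms(1-3), of v "- ?r / A s s"] by (simp only:)
qed

lemma rank_one_sum_insert:
  fixes M :: nat
  assumes U: "\<forall>i\<in>S. \<forall>i'\<in>S. B i i' = (\<Sum>m<M. cnj (U m i) * U m i')" and "s \<notin> S"
    and B_s: "\<And>i. i \<in> insert s S \<Longrightarrow> B s i = 0 \<and> B i s = 0"
    and A: "\<And>i i'. A i i' = B i i' + cnj (u i) * u i'"
  shows "\<exists>U (M::nat). \<forall>i\<in>insert s S. \<forall>i'\<in>insert s S. A i i' = (\<Sum>m<M. cnj (U m i) * U m i')"
proof (intro exI ballI)
  define U' where "U' m i = (if m = M then u i else if i = s then 0 else U m i)" for m i
  have U'_less: "U' m i = (if i = s then 0 else U m i)" if "m < M" for m i
    using less_imp_neq[OF that] by (simp add: U'_def)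
  fix i i' assume i: "i \<in> insert s S" and i': "i' \<in> insert s S"
  have "B i i' = (\<Sum>m<M. cnj (U' m i) * U' m i')"
  proof (cases "i = s \<or> i' = s")
    case True
    with i i' B_s show ?thesis by (auto simp: U'_less intro!: sum.neutral)
  next
    case False
    with i i' U show ?thesis by (auto simp: U'_less intro!: sum.cong)
  qed
  with A[of i i'] show "A i i' = (\<Sum>m<Suc M. cnj (U' m i) * U' m i')"
    by (simp add: U'_def)
qed

text \<open>Cholesky factorization: peel off the rank-one matrix spanned by the first row, unless that
  row vanishes, and recurse on the Schur complement.\<close>

lemma psd_on_rank_one_sum:
  assumes "finite S" "psd_on S A"
  shows "\<exists>U (M::nat). \<forall>i\<in>S. \<forall>i'\<in>S. A i i' = (\<Sum>m<M. cnj (U m i) * U m i')"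
  using assms
proof (induction S arbitrary: A rule: finite_induct)
  case empty
  show ?case by simp
next
  case (insert s S)
  note A = insert.prems
  have herm: "A i s = cnj (A s i)" if "i \<in> insert s S" for i
    using psd_on_hermitian[OF A] that by blast
  show ?case
  proof (cases "A s s = 0")
    case True
    have row: "A s i = 0 \<and> A i s = 0" if "i \<in> insert s S" for i
      using that herm[OF that] psd_on_zero_diagonal_row[OF A insert.hyps True] True by auto
    obtain U and M :: nat where U: "\<forall>i\<in>S. \<forall>i'\<in>S. A i i' = (\<Sum>m<M. cnj (U m i) * U m i')"
      using insert.IH[OF psd_on_subset[OF A]] insert.hyps by blast
    show ?thesis
      using rank_one_sum_insert[OF U \<open>s \<notin> S\<close> row, where u = "\<lambda>_. 0" and A = A] by simp
  next
    case False
    define a where "a = Re (A s s)"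
    have "0 \<le> A s s"
      using psd_on_diagonal_nonneg[OF A] insert.hyps by simp
    with False have a: "0 < a" "A s s = of_real a"
      by (auto simp: a_def less_eq_complex_def complex_eq_iff)
    define A' where "A' i i' = A i i' - cnj (A s i) * A s i' / A s s" for i i'
    have row: "A' s i = 0 \<and> A' i s = 0" if "i \<in> insert s S" for i
      using herm[OF that] a by (auto simp: A'_def)
    obtain U and M :: nat where U: "\<forall>i\<in>S. \<forall>i'\<in>S. A' i i' = (\<Sum>m<M. cnj (U m i) * U m i')"
      using insert.IH[OF psd_on_schur_complement[OF A insert.hyps False]] unfolding A'_def by blast
    have "A i i' = A' i i' + cnj (A s i / sqrt a) * (A s i' / sqrt a)" for i i'
      using a by (simp add: A'_def field_simps flip: of_real_mult)
    then show ?thesis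
      using rank_one_sum_insert[OF U \<open>s \<notin> S\<close> row, where u = "\<lambda>i. A s i / sqrt a" and A = A]
      by blast
  qed
qed

lemma psd_on_hadamard_sum_nonneg:
  assumes "finite S" "psd_on S A" "psd_on S B"
  shows "0 \<le> (\<Sum>i\<in>S. \<Sum>i'\<in>S. A i i' * B i i')"
proof -
  obtain U and M :: nat where U: "\<forall>i\<in>S. \<forall>i'\<in>S. A i i' = (\<Sum>m<M. cnj (U m i) * U m i')"
    using psd_on_rank_one_sum[OF assms(1,2)] by blast
  have "(\<Sum>i\<in>S. \<Sum>i'\<in>S. A i i' * B i i') = (\<Sum>i\<in>S. \<Sum>i'\<in>S. \<Sum>m<M. cnj (U m i) * B i i' * U m i')"
    using U by (intro sum.cong refl) (simp add: sum_distrib_left sum_distrib_right mult_ac)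
  also have "\<dots> = (\<Sum>i\<in>S. \<Sum>m<M. \<Sum>i'\<in>S. cnj (U m i) * B i i' * U m i')"
    by (intro sum.cong refl sum.swap)
  also have "\<dots> = (\<Sum>m<M. \<Sum>i\<in>S. \<Sum>i'\<in>S. cnj (U m i) * B i i' * U m i')"
    by (rule sum.swap)
  also have "0 \<le> \<dots>"
    by (intro sum_nonneg psd_on_quadratic[OF assms(3)])
  finally show ?thesis .
qed

lemma psd_on_gram:
  assumes "sesquilinear sm K" "positive_form K"
  shows "psd_on S (\<lambda>i i'. K (x i) (x i'))"
  unfolding psd_on_def
proof (intro conjI ballI allI)
  fix i i'
  show "K (x i) (x i') = cnj (K (x i') (x i))"
    using positive_form_imp_hermitian[OF assms] unfolding hermitian_form_def by blast
next
  fix v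
  show "0 \<le> (\<Sum>i\<in>S. \<Sum>i'\<in>S. cnj (v i) * K (x i) (x i') * v i')"
    using assms(2) unfolding positive_form_def sesquilinear_quadratic_sum[OF assms(1), symmetric]
    by blast
qed

context coalg
begin

lemma positive_form_conv:
  assumes "sesquilinear sm K" "positive_form K" "sesquilinear sm G" "positive_form G"
  shows "positive_form (conv \<Delta> K G)"
  unfolding positive_form_def
proof
  fix c
  let ?x = "\<lambda>i. fst (\<Delta> c ! i)" and ?y = "\<lambda>i. snd (\<Delta> c ! i)"
  have "conv \<Delta> K G c c = (\<Sum>i<length (\<Delta> c). \<Sum>i'<length (\<Delta> c). K (?x i) (?x i') * G (?y i) (?y i'))"
    by (simp add: conv_def tsum_conv_sum_nth)
  also have "0 \<le> \<dots>"
    using assms by (intro psd_on_hadamard_sum_nonneg psd_on_gram) auto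
  finally show "0 \<le> conv \<Delta> K G c c" .
qed

lemma positive_form_conv_unit: "positive_form (conv_unit \<delta>)"
  by (simp add: positive_form_def conv_unit_def less_eq_complex_def)

lemma positive_form_conv_pow:
  "sesquilinear sm K \<Longrightarrow> positive_form K \<Longrightarrow> positive_form (conv_pow \<Delta> \<delta> K k)"
  by (induction k)
    (simp_all add: positive_form_conv_unit positive_form_conv sesquilinear_conv_pow)

end

section \<open>Finite-dimensional comodules\<close>

lemma finite_dual_basis:
  fixes sm :: "complex \<Rightarrow> 'c::ab_group_add \<Rightarrow> 'c"
  assumes "vector_space sm" and "finite A"
  obtains p :: nat and f \<phi> where "\<And>k. lin_form sm (\<phi> k)"
    "\<And>j k. j < p \<Longrightarrow> k < p \<Longrightarrow> \<phi> j (f k) = (if j = k then 1 else 0)"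
    "\<And>a. a \<in> A \<Longrightarrow> a = (\<Sum>k<p. sm (\<phi> k a) (f k))"
proof -
  interpret V: vector_space sm by fact
  interpret P: vector_space_pair sm "(*) :: complex \<Rightarrow> complex \<Rightarrow> complex"
    by (intro vector_space_pair.intro assms(1) vector_space_complex)
  obtain B where B: "B \<subseteq> A" "V.independent B" "A \<subseteq> V.span B"
    by (rule V.maximal_independent_subset)
  have "finite B"
    using B(1) assms(2) finite_subset by blast
  then obtain f where f: "bij_betw f {..<card B} B"
    using ex_bij_betw_nat_finite by (auto simp: atLeast0LessThan)
  define \<phi> where "\<phi> k = P.construct B (\<lambda>b. if b = f k then 1 else 0)" for k
  have lin: "lin_form sm (\<phi> k)" for k
    unfolding lin_form_def \<phi>_def by (rule P.linear_construct[OF B(2)])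
  have fB: "f k \<in> B" if "k < card B" for k
    using f that by (auto simp: bij_betw_def)
  have dual: "\<phi> j (f k) = (if j = k then 1 else 0)" if "j < card B" "k < card B" for j k
    using that f P.construct_basis[OF B(2) fB[OF that(2)]]
    by (auto simp: \<phi>_def bij_betw_def inj_on_def)
  have "a = (\<Sum>k<card B. sm (\<phi> k a) (f k))" if a: "a \<in> A" for a
  proof -
    obtain u where u: "a = (\<Sum>b\<in>B. sm (u b) b)"
      using B(3) a unfolding V.span_finite[OF \<open>finite B\<close>] by blast
    also have "\<dots> = (\<Sum>k<card B. sm (u (f k)) (f k))"
      using sum.reindex_bij_betw[OF f, of "\<lambda>b. sm (u b) b"] by simp
    finally have a: "a = (\<Sum>k<card B. sm (u (f k)) (f k))" .
    have "\<phi> j a = u (f j)" if "j < card B" for j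
      using that by (subst a) (simp add: lin_form_sum_scale[OF lin] dual if_distrib[of "(*) _"]
          cong: if_cong)
    with a show ?thesis by simp
  qed
  with lin dual show ?thesis by (rule that)
qed

text \<open>The elements \<open>w j\<close> span a finite-dimensional right comodule: \<open>\<Delta> (w j) = \<Sum>k. z k j \<otimes> w k\<close>
  with \<open>\<delta> (z k j) = [k = j]\<close>.\<close>

locale comatrix = coalg sm \<Delta> \<delta> for sm :: "complex \<Rightarrow> 'c::ab_group_add \<Rightarrow> 'c" and \<Delta> \<delta> +
  fixes p :: nat and w :: "nat \<Rightarrow> 'c" and z :: "nat \<Rightarrow> nat \<Rightarrow> 'c"
  assumes counit_z: "k < p \<Longrightarrow> j < p \<Longrightarrow> \<delta> (z k j) = (if k = j then 1 else 0)"
    and comul_w: "bilin_form sm B \<Longrightarrow> j < p \<Longrightarrow> tsum (\<Delta> (w j)) B = (\<Sum>k<p. B (z k j) (w k))"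

text \<open>Here \<open>f\<close> is a basis of the span of the left tensor factors of \<open>\<Delta> c\<close> and \<open>\<phi>\<close> the dual
  basis, so that \<open>\<Delta> c = \<Sum>k. f k \<otimes> w k\<close>.\<close>

locale coalg_dual_basis = coalg sm \<Delta> \<delta> for sm :: "complex \<Rightarrow> 'c::ab_group_add \<Rightarrow> 'c" and \<Delta> \<delta> +
  fixes c :: 'c and p :: nat and f :: "nat \<Rightarrow> 'c" and \<phi> :: "nat \<Rightarrow> 'c \<Rightarrow> complex"
  assumes lin_form_\<phi>: "lin_form sm (\<phi> k)"
    and \<phi>_f: "j < p \<Longrightarrow> k < p \<Longrightarrow> \<phi> j (f k) = (if j = k then 1 else 0)"
    and expand: "(x, y) \<in> set (\<Delta> c) \<Longrightarrow> x = (\<Sum>k<p. sm (\<phi> k x) (f k))"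
begin

definition w :: "nat \<Rightarrow> 'c" where
  "w k = tsum (\<Delta> c) (\<lambda>x y. sm (\<phi> k x) y)"

definition z :: "nat \<Rightarrow> nat \<Rightarrow> 'c" where
  "z k j = tsum (\<Delta> (f k)) (\<lambda>x y. sm (\<phi> j x) y)"

lemma comul_c_expand:
  assumes B: "bilin_form sm B"
  shows "tsum (\<Delta> c) B = (\<Sum>k<p. B (f k) (w k))"
proof -
  have lin1: "lin_form sm (\<lambda>x. B x y)" and lin2: "lin_form sm (B x)" for x y
    using B unfolding bilin_form_def by auto
  have "tsum (\<Delta> c) B = tsum (\<Delta> c) (\<lambda>x y. \<Sum>k<p. \<phi> k x * B (f k) y)"
    by (rule tsum_cong) (subst expand, assumption, simp add: lin_form_sum_scale[OF lin1])
  also have "\<dots> = (\<Sum>k<p. B (f k) (w k))"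
    by (simp add: tsum_sum w_def lin_form_tsum[OF lin2] lin_form_scale[OF lin2])
  finally show ?thesis .
qed

lemma c_expand: "c = (\<Sum>k<p. sm (\<delta> (f k)) (w k))"
proof -
  have "(\<Sum>k<p. sm (\<delta> (f k)) (w k)) = tsum (\<Delta> c) (\<lambda>x y. sm (\<Sum>k<p. \<phi> k x * \<delta> (f k)) y)"
    by (simp add: w_def scale_tsum tsum_sum scale_sum_left mult.commute)
  also have "\<dots> = tsum (\<Delta> c) (\<lambda>x y. sm (\<delta> x) y)"
    by (rule tsum_cong) (subst (2) expand, assumption, simp add: lin_form_sum_scale[OF lin_form_counit])
  finally show ?thesis
    by (simp add: counit_left)
qed

lemma counit_z_kronecker: "k < p \<Longrightarrow> j < p \<Longrightarrow> \<delta> (z k j) = (if k = j then 1 else 0)"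
proof -
  assume "k < p" "j < p"
  have "\<delta> (z k j) = tsum (\<Delta> (f k)) (\<lambda>x y. \<phi> j x * \<delta> y)"
    by (simp add: z_def lin_form_tsum[OF lin_form_counit] lin_form_scale[OF lin_form_counit])
  also have "\<dots> = \<phi> j (tsum (\<Delta> (f k)) (\<lambda>x y. sm (\<delta> y) x))"
    by (simp add: lin_form_tsum[OF lin_form_\<phi>] lin_form_scale[OF lin_form_\<phi>] mult.commute)
  also have "\<dots> = (if k = j then 1 else 0)"
    using \<phi>_f[OF \<open>j < p\<close> \<open>k < p\<close>] by (simp add: counit_right eq_commute)
  finally show ?thesis .
qed

text \<open>Coassociativity moves the comultiplication of \<open>w j\<close> onto the left tensor factor of
  \<open>\<Delta> c\<close>, where the expansion of \<open>\<Delta> c\<close> applies.\<close>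

lemma comul_w_expand:
  assumes B: "bilin_form sm B" and "j < p"
  shows "tsum (\<Delta> (w j)) B = (\<Sum>k<p. B (z k j) (w k))"
proof -
  have lin1: "lin_form sm (\<lambda>x. B x y)" and lin2: "lin_form sm (B x)" for x y
    using B unfolding bilin_form_def by auto
  define T where "T x u v = \<phi> j x * B u v" for x u v
  have T: "trilin_form sm T"
    unfolding trilin_form_def T_def using lin1 lin2 lin_form_\<phi>
    by (auto intro: lin_form_cmult lin_form_multc)
  define G where "G x y = tsum (\<Delta> x) (\<lambda>u v. \<phi> j u * B v y)" for x y
  have G: "bilin_form sm G"
    unfolding bilin_form_def G_def
  proof (intro allI conjI)
    show "lin_form sm (\<lambda>y. tsum (\<Delta> x) (\<lambda>u v. \<phi> j u * B v y))" for x
      by (intro lin_form_tsum_fun vector_space_axioms lin_form_cmult lin2)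
    show "lin_form sm (\<lambda>x. tsum (\<Delta> x) (\<lambda>u v. \<phi> j u * B v y))" for y
      by (intro lin_form_comul) (simp add: bilin_form_def lin_form_multc lin_form_\<phi> lin_form_cmult lin1)
  qed
  have "tsum (\<Delta> (w j)) B = tsum (\<Delta> c) (\<lambda>x y. tsum (\<Delta> y) (\<lambda>u v. T x u v))"
    unfolding w_def T_def
    by (simp add: lin_form_tsum[OF lin_form_comul[OF B]] lin_form_scale[OF lin_form_comul[OF B]]
        tsum_cmult)
  also have "\<dots> = tsum (\<Delta> c) (\<lambda>x y. tsum (\<Delta> x) (\<lambda>u v. T u v y))"
    by (rule coassoc[OF T, symmetric])
  also have "\<dots> = tsum (\<Delta> c) G"
    by (simp add: G_def[abs_def] T_def)
  also have "\<dots> = (\<Sum>k<p. G (f k) (w k))"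
    by (rule comul_c_expand[OF G])
  also have "\<dots> = (\<Sum>k<p. B (z k j) (w k))"
    by (simp add: G_def z_def lin_form_tsum[OF lin1] lin_form_scale[OF lin1])
  finally show ?thesis .
qed

sublocale comatrix sm \<Delta> \<delta> p w z
  by unfold_locales (simp_all add: counit_z_kronecker comul_w_expand)

end

lemma (in coalg) exists_comatrix:
  obtains p w z \<alpha> where "comatrix sm \<Delta> \<delta> p w z" "c = (\<Sum>k<p. sm (\<alpha> k) (w k))"
proof -
  have "finite (fst ` set (\<Delta> c))"
    by simp
  then obtain p :: nat and f \<phi> where lin: "\<And>k. lin_form sm (\<phi> k)"
    and dual: "\<And>j k. j < p \<Longrightarrow> k < p \<Longrightarrow> \<phi> j (f k) = (if j = k then 1 else 0)"
    and expand: "\<And>x. x \<in> fst ` set (\<Delta> c) \<Longrightarrow> x = (\<Sum>k<p. sm (\<phi> k x) (f k))"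
    by (rule finite_dual_basis[OF vector_space_axioms]) blast
  have "x = (\<Sum>k<p. sm (\<phi> k x) (f k))" if "(x, y) \<in> set (\<Delta> c)" for x y
    using that by (intro expand) force
  with lin dual interpret coalg_dual_basis sm \<Delta> \<delta> c p f \<phi>
    by unfold_locales blast+
  show ?thesis
    by (rule that[OF comatrix_axioms c_expand])
qed

section \<open>Kernels on finite index sets\<close>

definition kapply :: "'i set \<Rightarrow> ('i \<Rightarrow> 'i \<Rightarrow> complex) \<Rightarrow> ('i \<Rightarrow> complex) \<Rightarrow> 'i \<Rightarrow> complex" where
  "kapply I M v i = (if i \<in> I then \<Sum>k\<in>I. M i k * v k else 0)"

definition l1_norm :: "'i set \<Rightarrow> ('i \<Rightarrow> complex) \<Rightarrow> real" where
  "l1_norm I v = (\<Sum>i\<in>I. cmod (v i))"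

definition kernel_norm :: "'i set \<Rightarrow> ('i \<Rightarrow> 'i \<Rightarrow> complex) \<Rightarrow> real" where
  "kernel_norm I M = (\<Sum>i\<in>I. \<Sum>k\<in>I. cmod (M i k))"

lemma kapply_kernel_add: "kapply I (\<lambda>i k. M i k + N i k) v = (\<lambda>i. kapply I M v i + kapply I N v i)"
  and kapply_kernel_divide: "kapply I (\<lambda>i k. M i k / a) v = (\<lambda>i. kapply I M v i / a)"
  and kapply_diff: "kapply I M (\<lambda>k. u k - v k) = (\<lambda>i. kapply I M u i - kapply I M v i)"
  and kapply_cmult: "kapply I M (\<lambda>k. a * v k) = (\<lambda>i. a * kapply I M v i)"
  and kapply_sum: "kapply I M (\<lambda>k. \<Sum>j\<in>J. w j k) = (\<lambda>i. \<Sum>j\<in>J. kapply I M (w j) i)"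
  by (auto simp: fun_eq_iff kapply_def algebra_simps sum.distrib sum_subtractf sum_distrib_left
      sum_divide_distrib intro: sum.swap)

lemma l1_norm_nonneg: "0 \<le> l1_norm I v"
  and kernel_norm_nonneg: "0 \<le> kernel_norm I M"
  by (simp_all add: l1_norm_def kernel_norm_def sum_nonneg)

lemma norm_le_l1_norm: "finite I \<Longrightarrow> i \<in> I \<Longrightarrow> cmod (v i) \<le> l1_norm I v"
  unfolding l1_norm_def by (rule member_le_sum) auto

lemma l1_norm_add_le: "l1_norm I (\<lambda>i. u i + v i) \<le> l1_norm I u + l1_norm I v"
  unfolding l1_norm_def sum.distrib[symmetric] by (intro sum_mono norm_triangle_ineq)

lemma l1_norm_diff_triangle:
  "l1_norm I (\<lambda>i. u i - w i) \<le> l1_norm I (\<lambda>i. u i - v i) + l1_norm I (\<lambda>i. v i - w i)"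
  unfolding l1_norm_def sum.distrib[symmetric]
  by (intro sum_mono) (rule norm_diff_triangle_le[OF order_refl order_refl])

lemma l1_norm_divide: "l1_norm I (\<lambda>i. v i / a) = l1_norm I v / cmod a"
  by (simp add: l1_norm_def norm_divide sum_divide_distrib)

lemma l1_norm_kapply_le:
  assumes "finite I"
  shows "l1_norm I (kapply I M v) \<le> kernel_norm I M * l1_norm I v"
proof -
  have "cmod (kapply I M v i) \<le> (\<Sum>k\<in>I. cmod (M i k) * l1_norm I v)" for i
  proof (cases "i \<in> I")
    case True
    then have "cmod (kapply I M v i) \<le> (\<Sum>k\<in>I. cmod (M i k) * cmod (v k))"
      by (simp add: kapply_def norm_sum norm_mult order_trans[OF norm_sum])
    also have "\<dots> \<le> (\<Sum>k\<in>I. cmod (M i k) * l1_norm I v)"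
      using assms by (intro sum_mono mult_left_mono norm_le_l1_norm) auto
    finally show ?thesis .
  qed (simp add: kapply_def sum_nonneg l1_norm_nonneg)
  then have "l1_norm I (kapply I M v) \<le> (\<Sum>i\<in>I. \<Sum>k\<in>I. cmod (M i k) * l1_norm I v)"
    unfolding l1_norm_def[of I "kapply I M v"] by (rule sum_mono)
  also have "\<dots> = kernel_norm I M * l1_norm I v"
    by (simp add: kernel_norm_def sum_distrib_right)
  finally show ?thesis .
qed

lemma l1_norm_funpow_le:
  assumes T: "\<And>u. l1_norm I (T u) \<le> \<beta> * l1_norm I u" and "0 \<le> \<beta>"
  shows "l1_norm I ((T ^^ m) v) \<le> \<beta> ^ m * l1_norm I v"
proof (induction m)
  case (Suc m)
  have "l1_norm I ((T ^^ Suc m) v) \<le> \<beta> * l1_norm I ((T ^^ m) v)"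
    using T by simp
  also have "\<dots> \<le> \<beta> * (\<beta> ^ m * l1_norm I v)"
    using Suc.IH \<open>0 \<le> \<beta>\<close> by (rule mult_left_mono)
  finally show ?case by (simp add: mult.assoc)
qed simp

text \<open>Telescoping: \<open>X (X\<^sup>m v) - Y (Y\<^sup>m v) = X (X\<^sup>m v - Y\<^sup>m v) + (X - Y) (Y\<^sup>m v)\<close>.\<close>

lemma l1_norm_funpow_diff_le:
  assumes lin: "\<And>u u'. (\<lambda>i. X u i - X u' i) = X (\<lambda>i. u i - u' i)"
    and X: "\<And>u. l1_norm I (X u) \<le> \<beta> * l1_norm I u"
    and Y: "\<And>u. l1_norm I (Y u) \<le> \<beta> * l1_norm I u"
    and XY: "\<And>u. l1_norm I (\<lambda>i. X u i - Y u i) \<le> \<epsilon> * l1_norm I u"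
    and "1 \<le> \<beta>" "0 \<le> \<epsilon>"
  shows "l1_norm I (\<lambda>i. (X ^^ m) v i - (Y ^^ m) v i) \<le> m * \<beta> ^ m * \<epsilon> * l1_norm I v"
proof (induction m)
  case 0
  show ?case by (simp add: l1_norm_def)
next
  case (Suc m)
  let ?x = "(X ^^ m) v" and ?y = "(Y ^^ m) v"
  have "l1_norm I (\<lambda>i. X ?x i - Y ?y i)
      \<le> l1_norm I (X (\<lambda>i. ?x i - ?y i)) + l1_norm I (\<lambda>i. X ?y i - Y ?y i)"
    using l1_norm_diff_triangle[of I "X ?x" "Y ?y" "X ?y"] by (simp add: lin)
  also have "\<dots> \<le> \<beta> * (m * \<beta> ^ m * \<epsilon> * l1_norm I v) + \<epsilon> * (\<beta> ^ m * l1_norm I v)"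
    using Suc.IH l1_norm_funpow_le[OF Y, of m v] assms(5,6)
    by (intro add_mono order_trans[OF X] order_trans[OF XY] mult_left_mono) auto
  also have "\<dots> \<le> Suc m * \<beta> ^ Suc m * \<epsilon> * l1_norm I v"
  proof -
    have "\<beta> ^ m * (\<epsilon> * l1_norm I v) \<le> \<beta> ^ Suc m * (\<epsilon> * l1_norm I v)"
      using assms(5,6) by (intro mult_right_mono power_increasing) (auto simp: l1_norm_nonneg)
    then show ?thesis by (simp add: algebra_simps)
  qed
  finally show ?case by simp
qed

lemma binomial_sum_Suc:
  fixes x :: "'a::comm_semiring_1"
  shows "(\<Sum>k\<le>m. of_nat (m choose k) * x ^ k * g k) + x * (\<Sum>k\<le>m. of_nat (m choose k) * x ^ k * g (Suc k))
    = (\<Sum>k\<le>Suc m. of_nat (Suc m choose k) * x ^ k * g k)"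
proof -
  have "(\<Sum>k\<le>Suc m. of_nat (Suc m choose k) * x ^ k * g k)
      = g 0 + (\<Sum>k\<le>m. of_nat (m choose Suc k) * x ^ Suc k * g (Suc k))
          + (\<Sum>k\<le>m. of_nat (m choose k) * x ^ Suc k * g (Suc k))"
    by (subst sum.atMost_Suc_shift) (simp add: sum.distrib algebra_simps del: sum.atMost_Suc)
  moreover have "(\<Sum>k\<le>m. of_nat (m choose k) * x ^ k * g k)
      = g 0 + (\<Sum>k<m. of_nat (m choose Suc k) * x ^ Suc k * g (Suc k))"
    by (simp add: sum.atMost_shift)
  moreover have "(\<Sum>k<m. of_nat (m choose Suc k) * x ^ Suc k * g (Suc k))
      = (\<Sum>k\<le>m. of_nat (m choose Suc k) * x ^ Suc k * g (Suc k))"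
    by (simp add: lessThan_Suc_atMost[symmetric] binomial_eq_0 del: lessThan_Suc_atMost)
  ultimately show ?thesis
    by (simp add: sum_distrib_left algebra_simps)
qed

lemma funpow_kapply_binomial:
  "((\<lambda>u i. u i + x * kapply I A u i) ^^ m) v
    = (\<lambda>i. \<Sum>k\<le>m. of_nat (m choose k) * x ^ k * (kapply I A ^^ k) v i)"
proof (induction m)
  case (Suc m)
  have "kapply I A (\<lambda>i. \<Sum>k\<le>m. of_nat (m choose k) * x ^ k * (kapply I A ^^ k) v i)
      = (\<lambda>i. \<Sum>k\<le>m. of_nat (m choose k) * x ^ k * (kapply I A ^^ Suc k) v i)"
    by (simp add: kapply_sum kapply_cmult)
  then show ?case
    using binomial_sum_Suc[of m x "\<lambda>k. (kapply I A ^^ k) v _"]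
    by (simp add: Suc.IH fun_eq_iff del: sum.atMost_Suc)
qed simp

lemma norm_funpow_kapply_le:
  assumes "finite I" "i \<in> I"
  shows "cmod ((kapply I A ^^ k) v i) \<le> kernel_norm I A ^ k * l1_norm I v"
  using norm_le_l1_norm[OF assms] l1_norm_funpow_le[OF l1_norm_kapply_le[OF assms(1)] kernel_norm_nonneg]
  by (rule order_trans)

lemma exp_sums_real: "(\<lambda>k. a ^ k / fact k) sums exp (a::real)"
  using exp_converges[of a] by (simp add: divide_inverse mult.commute scaleR_conv_of_real)

lemma summable_exp_series_bounded:
  fixes g :: "nat \<Rightarrow> complex"
  assumes "\<And>k. cmod (g k) \<le> a ^ k * B"
  shows "summable (\<lambda>k. g k / fact k)"
proof (rule summable_comparison_test)
  show "\<exists>N. \<forall>k\<ge>N. norm (g k / fact k) \<le> a ^ k / fact k * B"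
    using assms by (auto simp: norm_divide field_simps)
  show "summable (\<lambda>k. a ^ k / fact k * B)"
    using exp_sums_real[of a] by (intro summable_mult2 sums_summable)
qed

lemma summable_funpow_kapply_exp:
  "finite I \<Longrightarrow> i \<in> I \<Longrightarrow> summable (\<lambda>k. (kapply I A ^^ k) v i / fact k)"
  by (rule summable_exp_series_bounded[OF norm_funpow_kapply_le])

lemma binomial_div_pow_le_inverse_fact: "0 < n \<Longrightarrow> real (n choose k) / real n ^ k \<le> 1 / fact k"
  using binomial_fact_pow[of n k]
  by (simp add: field_simps) (metis of_nat_fact of_nat_le_iff of_nat_mult of_nat_power)

text \<open>The coefficients of \<open>(1 + x / n)\<^sup>n\<close> are dominated by those of \<open>exp x\<close>, which controls the
  distance of a binomial sum from the corresponding exponential series.\<close>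

lemma binomial_exp_series_dist_le:
  fixes g :: "nat \<Rightarrow> complex" and a B :: real
  assumes "0 \<le> a" and g: "\<And>k. cmod (g k) \<le> a ^ k * B" and "n > 0"
  shows "cmod ((\<Sum>k\<le>n. of_nat (n choose k) * (1 / of_nat n) ^ k * g k) - (\<Sum>k. g k / fact k))
    \<le> (exp a - (1 + a / n) ^ n) * B"
proof -
  define \<gamma> where "\<gamma> k = (if k \<le> n then real (n choose k) / real n ^ k else 0)" for k
  have \<gamma>_le: "\<gamma> k \<le> 1 / fact k" for k
    using binomial_div_pow_le_inverse_fact[OF \<open>n > 0\<close>, of k] by (simp add: \<gamma>_def)
  have sums_\<gamma>: "(\<lambda>k. \<gamma> k * a ^ k * B) sums ((1 + a / n) ^ n * B)"
  proof -
    have "(1 + a / n) ^ n = (\<Sum>k\<le>n. real (n choose k) * (a / n) ^ k)"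
      using binomial_ring[of "a / n" 1 n] by (simp add: add.commute)
    then have "(\<Sum>k\<le>n. \<gamma> k * a ^ k * B) = (1 + a / n) ^ n * B"
      by (simp add: \<gamma>_def sum_distrib_right power_divide)
    then show ?thesis
      using sums_finite[of "{..n}" "\<lambda>k. \<gamma> k * a ^ k * B"] by (simp add: \<gamma>_def)
  qed
  have sums_diff: "(\<lambda>k. (1 / fact k - \<gamma> k) * a ^ k * B) sums ((exp a - (1 + a / n) ^ n) * B)"
    using sums_diff[OF sums_mult2[OF exp_sums_real[of a], of B] sums_\<gamma>] by (simp add: algebra_simps)
  have "(\<Sum>k\<le>n. of_nat (n choose k) * (1 / of_nat n) ^ k * g k) = (\<Sum>k. of_real (\<gamma> k) * g k)"
    by (subst suminf_finite[of "{..n}"]) (auto simp: \<gamma>_def power_divide)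
  then have "(\<Sum>k\<le>n. of_nat (n choose k) * (1 / of_nat n) ^ k * g k) - (\<Sum>k. g k / fact k)
      = (\<Sum>k. of_real (\<gamma> k) * g k - g k / fact k)"
    using summable_finite[of "{..n}" "\<lambda>k. of_real (\<gamma> k) * g k"] summable_exp_series_bounded[OF g]
    by (simp add: suminf_diff \<gamma>_def)
  also have "\<dots> = (\<Sum>k. of_real (\<gamma> k - 1 / fact k) * g k)"
    by (simp add: of_real_diff left_diff_distrib)
  also have "cmod \<dots> \<le> (\<Sum>k. (1 / fact k - \<gamma> k) * a ^ k * B)"
  proof (rule norm_suminf_le)
    fix k
    have "\<bar>\<gamma> k - 1 / fact k\<bar> = 1 / fact k - \<gamma> k"
      using \<gamma>_le[of k] by simp
    then have "norm (of_real (\<gamma> k - 1 / fact k) * g k) = (1 / fact k - \<gamma> k) * cmod (g k)"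
      by (simp only: norm_mult norm_of_real)
    also have "\<dots> \<le> (1 / fact k - \<gamma> k) * (a ^ k * B)"
      using \<gamma>_le[of k] g[of k] by (intro mult_left_mono) auto
    finally show "norm (of_real (\<gamma> k - 1 / fact k) * g k) \<le> (1 / fact k - \<gamma> k) * a ^ k * B"
      by (simp add: mult.assoc)
  qed (use sums_diff in \<open>rule sums_summable\<close>)
  also have "\<dots> = (exp a - (1 + a / n) ^ n) * B"
    using sums_diff by (rule sums_unique[symmetric])
  finally show ?thesis .
qed

lemma powser_right_min_imp_nonneg_coeff:
  fixes c :: "nat \<Rightarrow> real"
  assumes "\<And>t. summable (\<lambda>n. c n * t ^ n)" and min: "\<And>t. 0 \<le> t \<Longrightarrow> c 0 \<le> (\<Sum>n. c n * t ^ n)"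
  shows "0 \<le> c 1"
proof (rule ccontr)
  assume "\<not> 0 \<le> c 1"
  have "DERIV (\<lambda>t. \<Sum>n. c n * t ^ n) 0 :> (\<Sum>n. diffs c n * 0 ^ n)"
    by (rule termdiffs_strong_converges_everywhere) (rule assms(1))
  then have "DERIV (\<lambda>t. \<Sum>n. c n * t ^ n) 0 :> c 1"
    by (simp add: diffs_def)
  moreover have "c 1 < 0"
    using \<open>\<not> 0 \<le> c 1\<close> by simp
  ultimately obtain d where "d > 0" and dec: "\<forall>h>0. h < d \<longrightarrow> (\<Sum>n. c n * (0 + h) ^ n) < (\<Sum>n. c n * 0 ^ n)"
    by (blast dest: DERIV_neg_dec_right)
  show False
    using dec[rule_format, of "d / 2"] min[of "d / 2"] \<open>d > 0\<close> by simp
qed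

lemma one_plus_pow_le_exp:
  fixes a b :: real and r :: nat
  assumes "0 \<le> a" "0 \<le> b" "0 < r"
  shows "(1 + a / r + b / real r ^ 2) ^ r \<le> exp (a + b)"
proof -
  have "(1 + a / r + b / real r ^ 2) ^ r \<le> exp (a / r + b / real r ^ 2) ^ r"
    using assms exp_ge_add_one_self[of "a / r + b / real r ^ 2"]
    by (intro power_mono) (simp_all add: add.assoc)
  also have "\<dots> = exp (a + b / r)"
    using \<open>r > 0\<close> by (simp add: exp_of_nat_mult[symmetric] field_simps power2_eq_square)
  also have "\<dots> \<le> exp (a + b)"
    using assms by (simp add: divide_le_eq mult_le_cancel_left1)
  finally show ?thesis .
qed

lemma l1_norm_kapply_divide_le:
  "finite I \<Longrightarrow> l1_norm I (\<lambda>j. kapply I A u j / a) \<le> kernel_norm I A / cmod a * l1_norm I u"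
  using l1_norm_kapply_le[of I A u] by (simp add: l1_norm_divide divide_right_mono)

lemma euler_perturbation_dist_le:
  assumes I: "finite I" and i: "i \<in> I" and "0 < r"
  shows "cmod (((\<lambda>u j. u j + kapply I A u j / of_nat r + kapply I B u j / of_nat r ^ 2) ^^ r) v i
      - ((\<lambda>u j. u j + kapply I A u j / of_nat r) ^^ r) v i)
    \<le> kernel_norm I B * exp (kernel_norm I A + kernel_norm I B) * l1_norm I v / r"
    (is "cmod ((?X ^^ r) v i - (?Y ^^ r) v i) \<le> _")
proof -
  define a b \<beta> where "a = kernel_norm I A" and "b = kernel_norm I B"
    and "\<beta> = 1 + a / r + b / real r ^ 2"
  have b: "0 \<le> b" and \<beta>: "1 \<le> \<beta>"
    by (simp_all add: a_def b_def \<beta>_def kernel_norm_nonneg)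
  have A: "l1_norm I (\<lambda>j. u j + kapply I A u j / of_nat r) \<le> l1_norm I u + a / r * l1_norm I u" for u
  proof -
    have "l1_norm I (\<lambda>j. kapply I A u j / of_nat r) \<le> a / r * l1_norm I u"
      using l1_norm_kapply_divide_le[OF I, of A u "of_nat r"] by (simp add: a_def)
    then show ?thesis
      using l1_norm_add_le[of I u "\<lambda>j. kapply I A u j / of_nat r"] by linarith
  qed
  have B: "l1_norm I (\<lambda>j. kapply I B u j / of_nat r ^ 2) \<le> b / real r ^ 2 * l1_norm I u" for u
    using l1_norm_kapply_divide_le[OF I, of B u "of_nat r ^ 2"] by (simp add: b_def norm_power)
  have X: "l1_norm I (?X u) \<le> \<beta> * l1_norm I u" for u
  proof -
    have "l1_norm I (?X u) \<le> l1_norm I (\<lambda>j. u j + kapply I A u j / of_nat r)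
        + l1_norm I (\<lambda>j. kapply I B u j / of_nat r ^ 2)"
      by (rule l1_norm_add_le)
    with A[of u] B[of u] show ?thesis
      by (simp add: \<beta>_def algebra_simps)
  qed
  have Y: "l1_norm I (?Y u) \<le> \<beta> * l1_norm I u" for u
  proof -
    have "\<beta> * l1_norm I u = l1_norm I u + a / r * l1_norm I u + b / real r ^ 2 * l1_norm I u"
      by (simp add: \<beta>_def algebra_simps)
    moreover have "0 \<le> b / real r ^ 2 * l1_norm I u"
      using b by (simp add: l1_norm_nonneg)
    ultimately show ?thesis
      using A[of u] by linarith
  qed
  have lin: "(\<lambda>j. ?X u j - ?X u' j) = ?X (\<lambda>j. u j - u' j)" for u u'
    by (simp add: kapply_diff fun_eq_iff diff_divide_distrib)
  have "cmod ((?X ^^ r) v i - (?Y ^^ r) v i) \<le> l1_norm I (\<lambda>j. (?X ^^ r) v j - (?Y ^^ r) v j)"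
    by (rule norm_le_l1_norm[OF I i])
  also have "\<dots> \<le> r * \<beta> ^ r * (b / real r ^ 2) * l1_norm I v"
    using B b by (intro l1_norm_funpow_diff_le[OF lin X Y _ \<beta>]) simp_all
  also have "\<dots> \<le> r * exp (a + b) * (b / real r ^ 2) * l1_norm I v"
    using one_plus_pow_le_exp[of a b r] \<open>0 < r\<close> b
    by (intro mult_right_mono mult_left_mono) (simp_all add: a_def \<beta>_def kernel_norm_nonneg l1_norm_nonneg)
  also have "\<dots> = b * exp (a + b) * l1_norm I v / r"
    using \<open>0 < r\<close> by (simp add: field_simps power2_eq_square)
  finally show ?thesis
    by (simp add: a_def b_def)
qed

lemma euler_binomial_dist_le:
  assumes I: "finite I" and i: "i \<in> I" and "0 < r"
  shows "cmod (((\<lambda>u j. u j + kapply I A u j / of_nat r) ^^ r) v i - (\<Sum>k. (kapply I A ^^ k) v i / fact k))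
    \<le> (exp (kernel_norm I A) - (1 + kernel_norm I A / r) ^ r) * l1_norm I v"
proof -
  have "(\<lambda>u j. u j + kapply I A u j / of_nat r) = (\<lambda>u j. u j + 1 / of_nat r * kapply I A u j)"
    by (simp add: fun_eq_iff)
  then have "((\<lambda>u j. u j + kapply I A u j / of_nat r) ^^ r) v i
      = (\<Sum>k\<le>r. of_nat (r choose k) * (1 / of_nat r) ^ k * (kapply I A ^^ k) v i)"
    by (simp only: funpow_kapply_binomial)
  then show ?thesis
    by (simp only:) (rule binomial_exp_series_dist_le[OF kernel_norm_nonneg
          norm_funpow_kapply_le[OF I i] \<open>0 < r\<close>])
qed

text \<open>Euler's product formula \<open>(1 + A/r + B/r\<^sup>2)\<^sup>r \<longrightarrow> exp A\<close> for kernels: the perturbation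
  \<open>B/r\<^sup>2\<close> changes the \<open>r\<close>-th power by \<open>O(1/r)\<close>, and \<open>(1 + A/r)\<^sup>r\<close> is a binomial sum.\<close>

lemma kapply_euler_product_tendsto:
  assumes I: "finite I" and i: "i \<in> I"
  shows "(\<lambda>r. ((\<lambda>u j. u j + kapply I A u j / of_nat r + kapply I B u j / of_nat r ^ 2) ^^ r) v i)
    \<longlonglongrightarrow> (\<Sum>k. (kapply I A ^^ k) v i / fact k)"
proof -
  define a b N where "a = kernel_norm I A" and "b = kernel_norm I B" and "N = l1_norm I v"
  define E where "E = (\<Sum>k. (kapply I A ^^ k) v i / fact k)"
  define X where "X r = (\<lambda>u j. u j + kapply I A u j / of_nat r + kapply I B u j / of_nat r ^ 2)" for r :: nat
  define Y where "Y r = (\<lambda>u j. u j + kapply I A u j / of_nat r)" for r :: nat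
  have "\<forall>\<^sub>F r in sequentially. norm ((X r ^^ r) v i - E)
      \<le> b * exp (a + b) * N / r + (exp a - (1 + a / r) ^ r) * N"
  proof (rule eventually_mono[OF eventually_gt_at_top[of 0]])
    fix r :: nat
    assume "0 < r"
    show "norm ((X r ^^ r) v i - E) \<le> b * exp (a + b) * N / r + (exp a - (1 + a / r) ^ r) * N"
      using norm_diff_triangle_le[OF euler_perturbation_dist_le[OF I i \<open>0 < r\<close>]
          euler_binomial_dist_le[OF I i \<open>0 < r\<close>]]
      by (simp add: X_def Y_def E_def a_def b_def N_def)
  qed
  moreover have "(\<lambda>r. (exp a - (1 + a / r) ^ r) * N) \<longlonglongrightarrow> (exp a - exp a) * N"
    by (rule tendsto_mult_right, rule tendsto_diff, rule tendsto_const, rule tendsto_exp_limit_sequentially)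
  then have "(\<lambda>r. b * exp (a + b) * N / r + (exp a - (1 + a / r) ^ r) * N) \<longlonglongrightarrow> 0"
    using tendsto_add[OF lim_const_over_n[of "b * exp (a + b) * N"]] by simp
  ultimately have "(\<lambda>r. (X r ^^ r) v i - E) \<longlonglongrightarrow> 0"
    by (rule Lim_null_comparison)
  then show ?thesis
    unfolding X_def E_def by (rule LIM_zero_cancel)
qed

section \<open>Convolution powers as iterated kernels\<close>

context comatrix
begin

definition pairs :: "(nat \<times> nat) set" where
  "pairs = {..<p} \<times> {..<p}"

definition gram :: "('c \<Rightarrow> 'c \<Rightarrow> complex) \<Rightarrow> nat \<times> nat \<Rightarrow> complex" where
  "gram G = (\<lambda>(j, j'). if j < p \<and> j' < p then G (w j) (w j') else 0)"

definition transfer :: "('c \<Rightarrow> 'c \<Rightarrow> complex) \<Rightarrow> nat \<times> nat \<Rightarrow> nat \<times> nat \<Rightarrow> complex" where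
  "transfer K = (\<lambda>(j, j') (k, k'). K (z k j) (z k' j'))"

lemma finite_pairs: "finite pairs"
  by (simp add: pairs_def)

lemma conv_w:
  assumes K: "sesquilinear sm K" and G: "sesquilinear sm G" and "j < p" "j' < p"
  shows "conv \<Delta> K G (w j) (w j') = (\<Sum>k<p. \<Sum>k'<p. K (z k j) (z k' j') * G (w k) (w k'))"
proof -
  define H where "H a b = (\<Sum>k'<p. K a (z k' j') * G b (w k'))" for a b
  have inner: "tsum (\<Delta> (w j')) (\<lambda>d1 d2. K a d1 * G b d2) = H a b" for a b
    unfolding H_def using K G \<open>j' < p\<close>
    by (intro comul_w) (simp add: bilin_form_def lin_form_cmult lin_form_multc sesquilinear_lin_right)
  have "bilin_form sm (\<lambda>a b. cnj (H a b))"
    unfolding H_def bilin_form_def cnj_sum complex_cnj_mult using K G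
    by (auto intro!: lin_form_sum_fun vector_space_axioms lin_form_cmult lin_form_multc
        sesquilinear_lin_left)
  then have "tsum (\<Delta> (w j)) (\<lambda>a b. cnj (H a b)) = (\<Sum>k<p. cnj (H (z k j) (w k)))"
    using \<open>j < p\<close> by (rule comul_w)
  then have "tsum (\<Delta> (w j)) H = (\<Sum>k<p. H (z k j) (w k))"
    by (metis (no_types) cnj_sum complex_cnj_cancel_iff tsum_cnj)
  moreover have "conv \<Delta> K G (w j) (w j') = tsum (\<Delta> (w j)) H"
    unfolding conv_def inner ..
  ultimately show ?thesis
    by (simp add: H_def)
qed

lemma sum_pairs: "(\<Sum>x\<in>pairs. f x) = (\<Sum>k<p. \<Sum>k'<p. f (k, k'))"
  by (simp add: pairs_def sum.cartesian_product)

lemma mem_pairs: "(j, j') \<in> pairs \<longleftrightarrow> j < p \<and> j' < p"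
  by (simp add: pairs_def)

lemma gram_conv:
  assumes "sesquilinear sm K" "sesquilinear sm G"
  shows "gram (conv \<Delta> K G) = kapply pairs (transfer K) (gram G)"
proof (intro ext, clarify)
  fix j j'
  show "gram (conv \<Delta> K G) (j, j') = kapply pairs (transfer K) (gram G) (j, j')"
    using assms by (auto simp: gram_def kapply_def sum_pairs mem_pairs transfer_def conv_w)
qed

lemma kapply_transfer_conv_unit: "kapply pairs (transfer (conv_unit \<delta>)) (gram G) = gram G"
proof (intro ext, clarify)
  fix j j' :: nat
  show "kapply pairs (transfer (conv_unit \<delta>)) (gram G) (j, j') = gram G (j, j')"
  proof (cases "j < p \<and> j' < p")
    case True
    then have "kapply pairs (transfer (conv_unit \<delta>)) (gram G) (j, j')
        = (\<Sum>k<p. \<Sum>k'<p. cnj (\<delta> (z k j)) * \<delta> (z k' j') * gram G (k, k'))"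
      by (simp add: kapply_def sum_pairs mem_pairs transfer_def conv_unit_def)
    also have "\<dots> = (\<Sum>k<p. \<Sum>k'<p. if k' = j' then if k = j then gram G (k, k') else 0 else 0)"
      using True by (intro sum.cong refl) (simp add: counit_z)
    also have "\<dots> = gram G (j, j')"
      using True by (simp add: sum.delta)
    finally show ?thesis .
  qed (auto simp: kapply_def mem_pairs gram_def)
qed

lemma transfer_add: "transfer (\<lambda>c d. K c d + G c d) = (\<lambda>i k. transfer K i k + transfer G i k)"
  and transfer_divide: "transfer (\<lambda>c d. K c d / a) = (\<lambda>i k. transfer K i k / a)"
  by (simp_all add: transfer_def fun_eq_iff split: prod.split)

lemma gram_conv_pow:
  "sesquilinear sm K \<Longrightarrow> gram (conv_pow \<Delta> \<delta> K m) = (kapply pairs (transfer K) ^^ m) (gram (conv_unit \<delta>))"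
  by (induction m) (simp_all add: gram_conv sesquilinear_conv_pow)

lemma gram_conv_pow_unit_plus:
  assumes "sesquilinear sm K"
  shows "gram (conv_pow \<Delta> \<delta> (\<lambda>c d. conv_unit \<delta> c d + K c d) m)
    = ((\<lambda>v i. v i + kapply pairs (transfer K) v i) ^^ m) (gram (conv_unit \<delta>))"
proof (induction m)
  case (Suc m)
  have "sesquilinear sm (\<lambda>c d. conv_unit \<delta> c d + K c d)"
    by (intro sesquilinear_plus sesquilinear_conv_unit assms)

  have "gram (conv_pow \<Delta> \<delta> (\<lambda>c d. conv_unit \<delta> c d + K c d) (Suc m))
      = kapply pairs (transfer (\<lambda>c d. conv_unit \<delta> c d + K c d))
          (gram (conv_pow \<Delta> \<delta> (\<lambda>c d. conv_unit \<delta> c d + K c d) m))"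
    by (simp add: gram_conv sesquilinear_conv_pow \<open>sesquilinear sm (\<lambda>c d. conv_unit \<delta> c d + K c d)\<close>)
  also have "\<dots> = (\<lambda>i. gram (conv_pow \<Delta> \<delta> (\<lambda>c d. conv_unit \<delta> c d + K c d) m) i
      + kapply pairs (transfer K) (gram (conv_pow \<Delta> \<delta> (\<lambda>c d. conv_unit \<delta> c d + K c d) m)) i)"
    by (simp only: transfer_add kapply_kernel_add kapply_transfer_conv_unit)
  finally show ?case
    by (simp add: Suc.IH)
qed simp

lemma diagonal_eq_gram_sum:
  assumes "sesquilinear sm G" and "c = (\<Sum>k<p. sm (\<alpha> k) (w k))"
  shows "G c c = (\<Sum>j<p. \<Sum>j'<p. cnj (\<alpha> j) * \<alpha> j' * gram G (j, j'))"
  using assms by (simp add: sesquilinear_quadratic_sum gram_def mult_ac)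

end

context coalg
begin

lemma conv_pow_diagonal_exponential_bound:
  assumes K: "sesquilinear sm K"
  obtains C A :: real where "\<And>k. cmod (conv_pow \<Delta> \<delta> K k c c) \<le> C * A ^ k"
proof -
  obtain p w z \<alpha> where "comatrix sm \<Delta> \<delta> p w z" and c: "c = (\<Sum>k<p. sm (\<alpha> k) (w k))"
    by (rule exists_comatrix)
  interpret M: comatrix sm \<Delta> \<delta> p w z by fact
  define A N where "A = kernel_norm M.pairs (M.transfer K)" and "N = l1_norm M.pairs (M.gram (conv_unit \<delta>))"
  have "cmod (conv_pow \<Delta> \<delta> K k c c) \<le> (\<Sum>j<p. \<Sum>j'<p. cmod (\<alpha> j) * cmod (\<alpha> j') * (A ^ k * N))" for k
  proof -
    have "cmod (conv_pow \<Delta> \<delta> K k c c) \<le> (\<Sum>j<p. \<Sum>j'<p.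
        cmod (\<alpha> j) * cmod (\<alpha> j') * cmod ((kapply M.pairs (M.transfer K) ^^ k) (M.gram (conv_unit \<delta>)) (j, j')))"
      unfolding M.diagonal_eq_gram_sum[OF sesquilinear_conv_pow[OF K] c] M.gram_conv_pow[OF K]
      by (rule order_trans[OF norm_sum sum_mono[OF order_trans[OF norm_sum sum_mono]]])
        (simp add: norm_mult)
    also have "\<dots> \<le> (\<Sum>j<p. \<Sum>j'<p. cmod (\<alpha> j) * cmod (\<alpha> j') * (A ^ k * N))"
      unfolding A_def N_def
      by (intro sum_mono mult_left_mono norm_funpow_kapply_le M.finite_pairs)
        (auto simp: M.mem_pairs)
    finally show ?thesis .
  qed
  moreover have "(\<Sum>j<p. \<Sum>j'<p. cmod (\<alpha> j) * cmod (\<alpha> j') * (A ^ k * N))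
      = (\<Sum>j<p. \<Sum>j'<p. cmod (\<alpha> j) * cmod (\<alpha> j')) * N * A ^ k" for k
    by (simp add: sum_distrib_right mult.assoc mult.commute[of "A ^ k" N])
  ultimately show ?thesis
    by (intro that[of "(\<Sum>j<p. \<Sum>j'<p. cmod (\<alpha> j) * cmod (\<alpha> j')) * N" A]) simp
qed

lemma conv_pow_euler_tendsto_exp_star:
  assumes K: "sesquilinear sm K" and Q: "sesquilinear sm Q"
  shows "(\<lambda>r. conv_pow \<Delta> \<delta> (\<lambda>c d. conv_unit \<delta> c d + (K c d / of_nat r + Q c d / of_nat r ^ 2)) r c c)
    \<longlonglongrightarrow> exp_star \<Delta> \<delta> K c c"
proof -
  obtain p w z \<alpha> where "comatrix sm \<Delta> \<delta> p w z" and c: "c = (\<Sum>k<p. sm (\<alpha> k) (w k))"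
    by (rule exists_comatrix)
  interpret M: comatrix sm \<Delta> \<delta> p w z by fact
  define g0 where "g0 = M.gram (conv_unit \<delta>)"
  let ?A = "kapply M.pairs (M.transfer K)"
  let ?E = "\<lambda>i. \<Sum>k. (?A ^^ k) g0 i / fact k"
  have i: "(j, j') \<in> M.pairs" if "j \<in> {..<p}" "j' \<in> {..<p}" for j j'
    using that by (simp add: M.mem_pairs)
  have "(\<lambda>k. conv_pow \<Delta> \<delta> K k c c / of_nat (fact k))
      sums (\<Sum>j<p. \<Sum>j'<p. cnj (\<alpha> j) * \<alpha> j' * ?E (j, j'))"
  proof -
    have "(\<lambda>k. \<Sum>j<p. \<Sum>j'<p. cnj (\<alpha> j) * \<alpha> j' * ((?A ^^ k) g0 (j, j') / fact k))
        sums (\<Sum>j<p. \<Sum>j'<p. cnj (\<alpha> j) * \<alpha> j' * ?E (j, j'))"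
      by (intro sums_sum sums_mult summable_sums summable_funpow_kapply_exp M.finite_pairs i)
    then show ?thesis
      by (simp add: M.diagonal_eq_gram_sum[OF sesquilinear_conv_pow[OF K] c] M.gram_conv_pow[OF K]
          g0_def sum_divide_distrib)
  qed
  then have exp_star: "exp_star \<Delta> \<delta> K c c = (\<Sum>j<p. \<Sum>j'<p. cnj (\<alpha> j) * \<alpha> j' * ?E (j, j'))"
    unfolding exp_star_def by (rule sums_unique[symmetric])
  have K_r: "sesquilinear sm (\<lambda>c d. K c d / of_nat r + Q c d / of_nat r ^ 2)" for r
    by (intro sesquilinear_plus sesquilinear_divide K Q)
  have step: "(\<lambda>v i. v i + kapply M.pairs (M.transfer (\<lambda>c d. K c d / of_nat r + Q c d / of_nat r ^ 2)) v i)
      = (\<lambda>v i. v i + ?A v i / of_nat r + kapply M.pairs (M.transfer Q) v i / of_nat r ^ 2)" for r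
    by (simp add: M.transfer_add M.transfer_divide kapply_kernel_add kapply_kernel_divide add.assoc)
  have "(\<lambda>r. \<Sum>j<p. \<Sum>j'<p. cnj (\<alpha> j) * \<alpha> j' * ((\<lambda>v i. v i + ?A v i / of_nat r
        + kapply M.pairs (M.transfer Q) v i / of_nat r ^ 2) ^^ r) g0 (j, j'))
      \<longlonglongrightarrow> (\<Sum>j<p. \<Sum>j'<p. cnj (\<alpha> j) * \<alpha> j' * ?E (j, j'))"
    by (intro tendsto_sum tendsto_mult_left kapply_euler_product_tendsto M.finite_pairs i)
  then show ?thesis
    unfolding exp_star
    by (simp add: M.diagonal_eq_gram_sum[OF sesquilinear_conv_pow[OF sesquilinear_plus[OF
          sesquilinear_conv_unit K_r]] c] M.gram_conv_pow_unit_plus[OF K_r] step g0_def)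
qed

end

section \<open>The two implications\<close>

lemma complex_nonneg_limit:
  assumes lim: "(f \<longlongrightarrow> l) F" and "F \<noteq> bot" and nonneg: "eventually (\<lambda>x. 0 \<le> f x) F"
  shows "0 \<le> (l :: complex)"
proof -
  have Re: "\<forall>\<^sub>F x in F. 0 \<le> Re (f x)" and Im: "\<forall>\<^sub>F x in F. Im (f x) = 0"
    using nonneg by (auto elim: eventually_mono simp: less_eq_complex_def)
  have "0 \<le> Re l"
    using tendsto_Re[OF lim] Re \<open>F \<noteq> bot\<close> by (rule tendsto_lowerbound)
  moreover have "0 \<le> Im l"
    by (rule tendsto_lowerbound[OF tendsto_Im[OF lim] _ \<open>F \<noteq> bot\<close>])
      (use Im in \<open>auto elim: eventually_mono\<close>)
  moreover have "Im l \<le> 0"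
    by (rule tendsto_upperbound[OF tendsto_Im[OF lim] _ \<open>F \<noteq> bot\<close>])
      (use Im in \<open>auto elim: eventually_mono\<close>)
  ultimately show ?thesis
    by (simp add: less_eq_complex_def)
qed

context coalg
begin

text \<open>Completing the square: with \<open>w = \<delta> x\<close> and \<open>x' = x - w c\<^sub>0 \<in> ker \<delta>\<close>, the left-hand side
  equals \<open>\<bar>w + s \<psi> x\<bar>\<^sup>2 + s L x' x'\<close>.\<close>

lemma unit_perturbation_nonneg:
  assumes L: "sesquilinear sm L" and herm: "hermitian_form L" and cp: "cond_positive \<delta> L"
    and c0: "\<delta> c0 = 1" and "0 \<le> s"
  defines "\<psi> \<equiv> \<lambda>d. L c0 d - of_real (Re (L c0 c0) / 2) * \<delta> d"
  shows "0 \<le> conv_unit \<delta> x x + of_real s * L x x + of_real s ^ 2 * (cnj (\<psi> x) * \<psi> x)"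
proof -
  define w where "w = \<delta> x"
  define x' where "x' = x - sm w c0"
  define a where "a = Re (L c0 c0)"
  define l where "l = L c0 x'"
  have x: "x = x' + sm w c0"
    by (simp add: x'_def)
  have "\<delta> x' = 0"
    using c0 by (simp add: x'_def w_def lin_form_diff[OF lin_form_counit] lin_form_scale[OF lin_form_counit])
  then have x'_nonneg: "0 \<le> L x' x'"
    using cp by (simp add: cond_positive_def)
  have a: "L c0 c0 = of_real a"
    using herm unfolding hermitian_form_def a_def by (metis Reals_cnj_iff complex_is_Real_iff of_real_Re)
  have "L x' c0 = cnj l"
    using herm unfolding hermitian_form_def l_def by blast
  then have Lxx: "L x x = L x' x' + w * cnj l + cnj w * l + cnj w * w * of_real a"
    using L a unfolding x l_def
    by (simp add: sesquilinear_add_left sesquilinear_add_right sesquilinear_scale_left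
        sesquilinear_scale_right algebra_simps)
  have \<psi>x: "\<psi> x = l + of_real a / 2 * w"
    using L a unfolding \<psi>_def l_def w_def[symmetric] a_def[symmetric] x'_def
    by (simp add: lin_form_diff[OF sesquilinear_lin_right[OF L]] sesquilinear_scale_right algebra_simps)
  have "conv_unit \<delta> x x + of_real s * L x x + of_real s ^ 2 * (cnj (\<psi> x) * \<psi> x)
      = of_real (cmod (w + of_real s * \<psi> x) ^ 2) + of_real s * L x' x'"
    unfolding conv_unit_def w_def[symmetric] Lxx \<psi>x complex_norm_square
    by (simp add: field_simps power2_eq_square)
  also have "0 \<le> \<dots>"
    using \<open>0 \<le> s\<close> x'_nonneg
    by (intro add_nonneg_nonneg mult_nonneg_nonneg) (simp_all add: less_eq_complex_def)
  finally show ?thesis .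
qed

lemma positive_form_exp_star:
  assumes L: "sesquilinear sm L" and herm: "hermitian_form L" and cp: "cond_positive \<delta> L"
  shows "positive_form (exp_star \<Delta> \<delta> L)"
  unfolding positive_form_def
proof
  fix c
  show "0 \<le> exp_star \<Delta> \<delta> L c c"
  proof (cases "\<exists>c1. \<delta> c1 \<noteq> 0")
    case False
    then have "c = 0"
      using counit_left[of c] by (simp add: tsum_zero)
    then show ?thesis
      by (simp add: exp_star_def sesquilinear_zero_left[OF sesquilinear_conv_pow[OF L]])
  next
    case True
    then obtain c1 where "\<delta> c1 \<noteq> 0" by blast
    define c0 where "c0 = sm (inverse (\<delta> c1)) c1"
    have c0: "\<delta> c0 = 1"
      using \<open>\<delta> c1 \<noteq> 0\<close> by (simp add: c0_def lin_form_scale[OF lin_form_counit])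
    define \<psi> where "\<psi> = (\<lambda>d. L c0 d - of_real (Re (L c0 c0) / 2) * \<delta> d)"
    define Q where "Q c d = cnj (\<psi> c) * \<psi> d" for c d
    have \<psi>: "lin_form sm \<psi>"
      unfolding \<psi>_def
      by (rule lin_form_minus[OF sesquilinear_lin_right[OF L] lin_form_cmult[OF lin_form_counit]])
    have Q: "sesquilinear sm Q"
      unfolding Q_def[abs_def] by (rule sesquilinear_rank_one[OF \<psi> \<psi>])
    let ?Z = "\<lambda>r c d. conv_unit \<delta> c d + (L c d / of_nat r + Q c d / of_nat r ^ 2)"
    have Z_eq: "?Z r x x = conv_unit \<delta> x x + of_real (1 / real r) * L x x
        + of_real (1 / real r) ^ 2 * (cnj (\<psi> x) * \<psi> x)" for r x
      by (simp add: Q_def divide_inverse power_inverse mult.commute)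
    have pos: "positive_form (?Z r)" for r
      unfolding positive_form_def Z_eq \<psi>_def
      by (intro allI unit_perturbation_nonneg[OF L herm cp c0]) simp
    have ses: "sesquilinear sm (?Z r)" for r
      by (intro sesquilinear_plus sesquilinear_conv_unit sesquilinear_divide L Q)
    have "\<forall>\<^sub>F r in sequentially. 0 \<le> conv_pow \<Delta> \<delta> (?Z r) r c c"
      using positive_form_conv_pow[OF ses pos] unfolding positive_form_def by (simp add: always_eventually)
    then show ?thesis
      by (rule complex_nonneg_limit[OF conv_pow_euler_tendsto_exp_star[OF L Q] sequentially_bot])
  qed
qed

lemma exp_star_cmult_sums:
  assumes L: "sesquilinear sm L"
  shows "(\<lambda>k. conv_pow \<Delta> \<delta> L k c c * of_real t ^ k / fact k)
    sums exp_star \<Delta> \<delta> (\<lambda>c d. of_real t * L c d) c c"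
proof -
  obtain C A where bound: "\<And>k. cmod (conv_pow \<Delta> \<delta> L k c c) \<le> C * A ^ k"
    by (rule conv_pow_diagonal_exponential_bound[OF L, where c = c]) blast
  have "cmod (conv_pow \<Delta> \<delta> L k c c * of_real t ^ k) \<le> (A * \<bar>t\<bar>) ^ k * C" for k
    using mult_right_mono[OF bound[of k], of "\<bar>t\<bar> ^ k"]
    by (simp add: norm_mult norm_power power_mult_distrib mult_ac)
  then have "summable (\<lambda>k. conv_pow \<Delta> \<delta> L k c c * of_real t ^ k / fact k)"
    by (rule summable_exp_series_bounded)
  then show ?thesis
    by (simp add: exp_star_def conv_pow_cmult summable_sums mult_ac)
qed

text \<open>Conversely, \<open>exp\<^sub>\<star>(tL) c c = \<Sum>\<^sub>k t\<^sup>k L\<^sup>\<star>\<^sup>k c c / k!\<close> is an entire power series in \<open>t\<close> whose value is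
  real and nonnegative for \<open>t \<ge> 0\<close>; its derivative at \<open>0\<close> is \<open>L c c\<close>.\<close>

lemma real_diagonal_if_exp_star_positive:
  assumes L: "sesquilinear sm L"
    and pos: "\<And>t. 0 \<le> t \<Longrightarrow> positive_form (exp_star \<Delta> \<delta> (\<lambda>c d. of_real t * L c d))"
  shows "Im (L c c) = 0" and "\<delta> c = 0 \<Longrightarrow> 0 \<le> Re (L c c)"
proof -
  define a where "a k = conv_pow \<Delta> \<delta> L k c c" for k
  define E where "E t = exp_star \<Delta> \<delta> (\<lambda>c d. of_real t * L c d) c c" for t
  have E_sums: "(\<lambda>k. a k * of_real t ^ k / fact k) sums E t" for t
    unfolding a_def E_def by (rule exp_star_cmult_sums[OF L])
  have E_nonneg: "0 \<le> E t" if "0 \<le> t" for t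
    using pos[OF that] by (simp add: E_def positive_form_def)
  have Re_fact: "Re (z / fact k) = Re z / fact k" and Im_fact: "Im (z / fact k) = Im z / fact k" for z k
    by (metis Re_divide_of_nat of_nat_fact, metis Im_divide_of_nat of_nat_fact)
  have Re_sums: "(\<lambda>k. Re (a k) / fact k * t ^ k) sums Re (E t)"
    and Im_sums: "(\<lambda>k. Im (a k) / fact k * t ^ k) sums Im (E t)" for t
    using sums_Re[OF E_sums[of t]] sums_Im[OF E_sums[of t]]
    by (simp_all add: Re_fact Im_fact flip: of_real_power)
  have a0: "a 0 = cnj (\<delta> c) * \<delta> c" and a1: "a (Suc 0) = L c c"
    by (simp_all add: a_def conv_unit_def conv_conv_unit_right[OF L])
  have "0 \<le> Im (a 1) / fact 1"
    using Im_sums E_nonneg a0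
    by (intro powser_right_min_imp_nonneg_coeff) (auto simp: sums_iff less_eq_complex_def)
  moreover have "0 \<le> - Im (a 1) / fact 1"
    using sums_minus[OF Im_sums] E_nonneg a0
    by (intro powser_right_min_imp_nonneg_coeff) (auto simp: sums_iff less_eq_complex_def)
  ultimately show "Im (L c c) = 0"
    by (simp add: a1)
  assume "\<delta> c = 0"
  then have "0 \<le> Re (a 1) / fact 1"
    using Re_sums E_nonneg a0
    by (intro powser_right_min_imp_nonneg_coeff) (auto simp: sums_iff less_eq_complex_def)
  then show "0 \<le> Re (L c c)"
    by (simp add: a1)
qed

end

theorem theorem3:
  fixes smult_c :: "complex \<Rightarrow> 'c::ab_group_add \<Rightarrow> 'c"
    and \<Delta> :: "'c \<Rightarrow> ('c \<times> 'c) list"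
    and \<delta> :: "'c \<Rightarrow> complex"
    and L :: "'c \<Rightarrow> 'c \<Rightarrow> complex"
  assumes "coalgebra smult_c \<Delta> \<delta>"
    and "sesquilinear smult_c L"
  shows "(cond_positive \<delta> L \<and> hermitian_form L) \<longleftrightarrow>
         (\<forall>t::real. t \<ge> 0 \<longrightarrow> positive_form (exp_star \<Delta> \<delta> (\<lambda>c d. complex_of_real t * L c d)))"
proof -
  interpret coalg smult_c \<Delta> \<delta>
    by (rule coalg.intro) fact
  show ?thesis
  proof (intro iffI allI impI conjI)
    fix t :: real
    assume "cond_positive \<delta> L \<and> hermitian_form L" and "0 \<le> t"
    then show "positive_form (exp_star \<Delta> \<delta> (\<lambda>c d. of_real t * L c d))"
      by (intro positive_form_exp_star sesquilinear_cmult assms(2) hermitian_form_cmult_real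
          cond_positive_cmult_nonneg) auto
  next
    assume "\<forall>t\<ge>0. positive_form (exp_star \<Delta> \<delta> (\<lambda>c d. of_real t * L c d))"
    then have "Im (L c c) = 0" and "\<delta> c = 0 \<Longrightarrow> 0 \<le> Re (L c c)" for c
      using real_diagonal_if_exp_star_positive[OF assms(2)] by blast+
    then show "cond_positive \<delta> L" and "hermitian_form L"
      by (auto simp: cond_positive_def less_eq_complex_def intro: hermitian_formI_real_diagonal[OF assms(2)])
  qed
qed

end
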